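(* Let $f\ge 0$ be an integer and let $\mathcal{G}=(\mathcal{V},\mathcal{E})$ be a digraph with $n$ nodes. Consider the synchronous second-order agent network described in the context, in which every normal agent uses the DP-MSR algorithm with parameter $f$, and suppose $T>0$ and $\alpha>0$ satisfy $1+\frac{T^2}{2}\le \alpha T\le 2-\frac{T^2}{2}$. Then, under the $f$-total malicious model, the network reaches resilient consensus if and only if $\mathcal{G}$ is $(f+1,f+1)$-robust. Moreover, in that case the safety interval can be taken to be $$\mathcal{S}=\Big[\min_{i\notin\mathcal{M}}\hat{x}_i[0]+\min\Big\{0,\min_{i\notin\mathcal{M}}\big(T-\tfrac{\alpha T^2}{2}\big)v_i[0]\Big\},\ \max_{i\notin\mathcal{M}}\hat{x}_i[0]+\max\Big\{0,\max_{i\notin\mathcal{M}}\big(T-\tfrac{\alpha T^2}{2}\big)v_i[0]\Big\}\Big].$$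
   Context: Graphs. A digraph $\mathcal{G}=(\mathcal{V},\mathcal{E})$ has node set $\mathcal{V}=\{1,\dots,n\}$, $n>1$, and edge set $\mathcal{E}\subseteq\mathcal{V}\times\mathcal{V}$ without self-loops; $(j,i)\in\mathcal{E}$ means node $i$ receives information from node $j$. The neighbor set of $i$ is $\mathcal{N}_i=\{j:(j,i)\in\mathcal{E}\}$. For $\mathcal{S}'\subseteq\mathcal{V}$ and integer $r$, let $\mathcal{X}^r_{\mathcal{S}'}$ be the set of nodes in $\mathcal{S}'$ having at least $r$ in-neighbors outside $\mathcal{S}'$. The digraph is $(r,s)$-robust if for every pair of nonempty disjoint subsets $\mathcal{S}_1,\mathcal{S}_2\subset\mathcal{V}$ at least one holds: (1) $\mathcal{X}^r_{\mathcal{S}_1}=\mathcal{S}_1$; (2) $\mathcal{X}^r_{\mathcal{S}_2}=\mathcal{S}_2$; (3) $|\mathcal{X}^r_{\mathcal{S}_1}|+|\mathcal{X}^r_{\mathcal{S}_2}|\ge s$. A graph is $r$-robust if it is $(r,1)$-robust. Weights. Fix $\gamma>0$ and weights $a_{ij}\in[\gamma,1)$ for $(j,i)\in\mathcal{E}$ with $\sum_{j\in\mathcal{N}_i}a_{ij}\le 1$ for every $i$. Agents. Each agent $i$ has position $\hat{x}_i[k]\in\mathbb{R}$ (position minus a constant formation offset) and velocity $v_i[k]\in\mathbb{R}$, $k\in\mathbb{Z}_+$, with sampled double-integrator dynamics $\hat{x}_i[k+1]=\hat{x}_i[k]+Tv_i[k]+\frac{T^2}{2}u_i[k]$, $v_i[k+1]=v_i[k]+Tu_i[k]$,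 where $T>0$ is the sampling period. A subset $\mathcal{M}\subset\mathcal{V}$ of agents is malicious: their inputs $u_i[k]$ are arbitrary (they may know everything, including other agents' states, and may collude). All other agents are normal and use $u_i[k]=-\sum_{j\in\mathcal{N}_i}a_{ij}[k](\hat{x}_i[k]-\hat{x}_j[k])-\alpha v_i[k]$ with $\alpha>0$, where $a_{ij}[k]$ is given by the DP-MSR algorithm. DP-MSR algorithm (parameter $f$), synchronous: at each time $k$, each normal agent $i$ considers the relative positions $\hat{x}_j[k]-\hat{x}_i[k]$, $j\in\mathcal{N}_i$. If fewer than $f$ neighbors have relative value $\ge 0$, it ignores all of those neighbors; otherwise it ignores $f$ neighbors with the largest relative values. Similarly, if fewer than $f$ neighbors have relative value $\le 0$, it ignores all of those; otherwise it ignores $f$ neighbors with the smallest relative values. Then $a_{ij}[k]=0$ for ignored neighbors $j$ and $a_{ij}[k]=a_{ij}$ for the other neighbors. Malicious models. The network is $f$-total malicious if $|\mathcal{M}|\le f$; it is $f$-local malicious if $|\mathcal{N}_i\cap\mathcal{M}|\le f$ for every normal agent $i$. Resilient consensus. The network reaches resilient consensus if for every admissible malicious set $\mathcal{M}$ (under the model considered), all initial positions and velocities, and all malicious inputs: (Safety) there is a bounded interval $\mathcal{S}$ depending only on the initial positions and velocities of the normal agents with $\hat{x}_i[k]\in\mathcal{S}$ for all normal $i$ and all $k\in\mathbb{Z}_+$; (Agreement) there exists $c\in\mathcal{S}$ with $\lim_{k\to\infty}\hat{x}_i[k]=c$ and $\lim_{k\to\infty}v_i[k]=0$ for all normal $i$.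 *)

theory Defs
  imports "HOL-Analysis.Analysis"
begin

text \<open>Edge (j,i) in E means node i receives information from node j.\<close>

definition in_nbrs :: "('v \<times> 'v) set \<Rightarrow> 'v \<Rightarrow> 'v set" where
  "in_nbrs E i = {j. (j, i) \<in> E}"

definition reach_set :: "('v \<times> 'v) set \<Rightarrow> nat \<Rightarrow> 'v set \<Rightarrow> 'v set" where
  "reach_set E r S = {i \<in> S. card {j. (j, i) \<in> E \<and> j \<notin> S} \<ge> r}"

definition rs_robust :: "('v \<times> 'v) set \<Rightarrow> nat \<Rightarrow> nat \<Rightarrow> bool" where
  "rs_robust E r s \<longleftrightarrow>
     (\<forall>S1 S2. S1 \<noteq> {} \<and> S2 \<noteq> {} \<and> S1 \<inter> S2 = {} \<longrightarrow>
        reach_set E r S1 = S1 \<or> reach_set E r S2 = S2 \<or>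
        card (reach_set E r S1) + card (reach_set E r S2) \<ge> s)"

text \<open>A is an admissible set of ignored neighbours with the largest relative values
  (g j = relative position of neighbour j), resp. the smallest relative values.
  Ties are resolved arbitrarily (every resolution is admissible).\<close>

definition ignored_large :: "'v set \<Rightarrow> ('v \<Rightarrow> real) \<Rightarrow> nat \<Rightarrow> 'v set \<Rightarrow> bool" where
  "ignored_large N g f A \<longleftrightarrow>
     (card {j \<in> N. g j \<ge> 0} < f \<and> A = {j \<in> N. g j \<ge> 0}) \<or>
     (card {j \<in> N. g j \<ge> 0} \<ge> f \<and> A \<subseteq> N \<and> card A = f \<and> (\<forall>a\<in>A. \<forall>b\<in>N - A. g b \<le> g a))"

definition ignored_small :: "'v set \<Rightarrow> ('v \<Rightarrow> real) \<Rightarrow> nat \<Rightarrow> 'v set \<Rightarrow> bool" where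
  "ignored_small N g f B \<longleftrightarrow>
     (card {j \<in> N. g j \<le> 0} < f \<and> B = {j \<in> N. g j \<le> 0}) \<or>
     (card {j \<in> N. g j \<le> 0} \<ge> f \<and> B \<subseteq> N \<and> card B = f \<and> (\<forall>b\<in>B. \<forall>c\<in>N - B. g b \<le> g c))"

definition dpmsr_ignored :: "('v \<times> 'v) set \<Rightarrow> nat \<Rightarrow> ('v \<Rightarrow> real) \<Rightarrow> 'v \<Rightarrow> 'v set \<Rightarrow> bool" where
  "dpmsr_ignored E f xk i R \<longleftrightarrow>
     (\<exists>A B. ignored_large (in_nbrs E i) (\<lambda>j. xk j - xk i) f A \<and>
            ignored_small (in_nbrs E i) (\<lambda>j. xk j - xk i) f B \<and> R = A \<union> B)"

text \<open>x k i = position (minus offset) of agent i at time k, v k i = velocity.\<close>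

definition execution ::
  "('v \<times> 'v) set \<Rightarrow> ('v \<Rightarrow> 'v \<Rightarrow> real) \<Rightarrow> nat \<Rightarrow> real \<Rightarrow> real \<Rightarrow> 'v set
     \<Rightarrow> (nat \<Rightarrow> 'v \<Rightarrow> real) \<Rightarrow> (nat \<Rightarrow> 'v \<Rightarrow> real) \<Rightarrow> bool" where
  "execution E a f \<alpha> T M x v \<longleftrightarrow>
     (\<forall>k i. \<exists>u::real.
        x (Suc k) i = x k i + T * v k i + T\<^sup>2 / 2 * u \<and>
        v (Suc k) i = v k i + T * u \<and>
        (i \<notin> M \<longrightarrow> (\<exists>R. dpmsr_ignored E f (x k) i R \<and>
            u = - (\<Sum>j \<in> in_nbrs E i - R. a i j * (x k i - x k j)) - \<alpha> * v k i)))"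

definition normal_part :: "'v set \<Rightarrow> ('v \<Rightarrow> real) \<Rightarrow> 'v \<Rightarrow> real" where
  "normal_part M g = (\<lambda>i. if i \<in> M then 0 else g i)"

definition safe_agree ::
  "'v set \<Rightarrow> (nat \<Rightarrow> 'v \<Rightarrow> real) \<Rightarrow> (nat \<Rightarrow> 'v \<Rightarrow> real) \<Rightarrow> real set \<Rightarrow> bool" where
  "safe_agree M x v S \<longleftrightarrow>
     bounded S \<and> is_interval S \<and>
     (\<forall>k. \<forall>i. i \<notin> M \<longrightarrow> x k i \<in> S) \<and>
     (\<exists>c\<in>S. \<forall>i. i \<notin> M \<longrightarrow> (\<lambda>k. x k i) \<longlonglongrightarrow> c \<and> (\<lambda>k. v k i) \<longlonglongrightarrow> 0)"

text \<open>The safety interval is given by a function of M and the initial positions/velocities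
  of the normal agents only.\<close>
definition resilient_consensus_total ::
  "('v \<times> 'v) set \<Rightarrow> ('v \<Rightarrow> 'v \<Rightarrow> real) \<Rightarrow> nat \<Rightarrow> real \<Rightarrow> real \<Rightarrow> bool" where
  "resilient_consensus_total E a f \<alpha> T \<longleftrightarrow>
     (\<exists>S :: 'v set \<Rightarrow> ('v \<Rightarrow> real) \<Rightarrow> ('v \<Rightarrow> real) \<Rightarrow> real set.
        \<forall>M. M \<noteq> UNIV \<and> card M \<le> f \<longrightarrow>
          (\<forall>x v. execution E a f \<alpha> T M x v \<longrightarrow>
             safe_agree M x v (S M (normal_part M (x 0)) (normal_part M (v 0)))))"

definition safety_interval ::
  "'v set \<Rightarrow> real \<Rightarrow> real \<Rightarrow> ('v \<Rightarrow> real) \<Rightarrow> ('v \<Rightarrow> real) \<Rightarrow> real set" where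
  "safety_interval M \<alpha> T x0 v0 =
     {Min {x0 i | i. i \<notin> M} + min 0 (Min {(T - \<alpha> * T\<^sup>2 / 2) * v0 i | i. i \<notin> M})
      .. Max {x0 i | i. i \<notin> M} + max 0 (Max {(T - \<alpha> * T\<^sup>2 / 2) * v0 i | i. i \<notin> M})}"

end

theory Submission
  imports Defs
begin

(* Eliminating the velocities, a normal position satisfies
   x[k+2] = c1 x[k+1] + c0 x[k] + h (weighted kept neighbours at times k+1 and k),
   where 1 + T^2/2 <= alpha T <= 2 - T^2/2 makes c1, c0 >= 0 and all weights sum to one; since
   DP-MSR only keeps values lying between normal values, the window spanned by the normal
   positions at two consecutive times can only shrink. Robustness makes it shrink by a fixed
   factor: for f >= 1 the normal agents close to either end of the window form two shrinking
   families of sets, one of which empties within 2n steps; for f = 0 the graph has a root whose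
   gap to the window ends spreads along walks. Hence all normal positions converge to a common
   limit, the velocities (read off from consecutive positions) tend to zero, and the window at
   time 0 lies in the stated safety interval. If robustness fails for S1, S2, declaring the agents of S1, S2 with f + 1 in-neighbours
   outside their own set malicious and idle lets S1 rest at 0 and S2 at 1 forever. *)

section \<open>DP-MSR selection\<close>

lemma exists_top_subset:
  fixes g :: "'a \<Rightarrow> real"
  assumes "finite N" "k \<le> card N"
  shows "\<exists>A\<subseteq>N. card A = k \<and> (\<forall>a\<in>A. \<forall>b\<in>N - A. g b \<le> g a)"
  using assms(2)
proof (induction k)
  case 0
  then show ?case by auto
next
  case (Suc k)
  then obtain A where A: "A \<subseteq> N" "card A = k" "\<forall>a\<in>A. \<forall>b\<in>N - A. g b \<le> g a"
    by auto
  have fin: "finite (N - A)" using assms(1) by auto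
  have "N - A \<noteq> {}"
  proof
    assume "N - A = {}"
    then have "card N \<le> card A" using assms(1) A(1) by (simp add: card_mono)
    then show False using Suc.prems A(2) by simp
  qed
  then have "Max (g ` (N - A)) \<in> g ` (N - A)" using fin by simp
  then obtain b where b: "b \<in> N - A" "g b = Max (g ` (N - A))" by auto
  then have b_top: "\<forall>c\<in>N - A. g c \<le> g b" using fin by simp
  have "card (insert b A) = Suc k" using A b assms(1) finite_subset by fastforce
  moreover have "insert b A \<subseteq> N" using A b by auto
  moreover have "\<forall>a\<in>insert b A. \<forall>c\<in>N - insert b A. g c \<le> g a" using A(3) b_top by auto
  ultimately show ?case by blast
qed

lemma ignored_large_uminus_iff: "ignored_large N (\<lambda>j. - g j) f A \<longleftrightarrow> ignored_small N g f A"
  unfolding ignored_large_def ignored_small_def by auto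

lemma ignored_small_uminus_iff: "ignored_small N (\<lambda>j. - g j) f A \<longleftrightarrow> ignored_large N g f A"
  unfolding ignored_large_def ignored_small_def by auto

lemma ignored_large_exists:
  assumes "finite N"
  shows "\<exists>A. ignored_large N g f A"
proof (cases "card {j \<in> N. g j \<ge> 0} < f")
  case True
  then show ?thesis unfolding ignored_large_def by auto
next
  case False
  have "card {j \<in> N. g j \<ge> 0} \<le> card N" using assms by (intro card_mono) auto
  then obtain A where "A \<subseteq> N" "card A = f" "\<forall>a\<in>A. \<forall>b\<in>N - A. g b \<le> g a"
    using exists_top_subset[OF assms, of f g] False by auto
  then show ?thesis using False unfolding ignored_large_def by auto
qed

lemma ignored_small_exists: "finite N \<Longrightarrow> \<exists>B. ignored_small N g f B"
  using ignored_large_exists[of N "\<lambda>j. - g j" f] by (simp add: ignored_large_uminus_iff)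

lemma dpmsr_ignored_exists:
  fixes E :: "('v::finite \<times> 'v) set"
  shows "\<exists>R. dpmsr_ignored E f xk i R"
  using finite[of "in_nbrs E i"] ignored_large_exists[of "in_nbrs E i"] ignored_small_exists[of "in_nbrs E i"]
  unfolding dpmsr_ignored_def by blast

lemma dpmsr_ignored_uminus_iff:
  "dpmsr_ignored E f (\<lambda>j. - xk j) i R \<longleftrightarrow> dpmsr_ignored E f xk i R"
proof -
  have "ignored_large N (\<lambda>j. xk i - xk j) f A \<longleftrightarrow> ignored_small N (\<lambda>j. xk j - xk i) f A"
    and "ignored_small N (\<lambda>j. xk i - xk j) f A \<longleftrightarrow> ignored_large N (\<lambda>j. xk j - xk i) f A"
    for N A
    using ignored_large_uminus_iff[of N "\<lambda>j. xk j - xk i"]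
      ignored_small_uminus_iff[of N "\<lambda>j. xk j - xk i"] by simp_all
  then show ?thesis unfolding dpmsr_ignored_def by (auto simp: Un_commute)
qed

lemma ignored_large_subset: "ignored_large N g f A \<Longrightarrow> A \<subseteq> N"
  unfolding ignored_large_def by auto

lemma ignored_small_subset: "ignored_small N g f B \<Longrightarrow> B \<subseteq> N"
  unfolding ignored_small_def by auto

lemma ignored_large_above_kept:
  assumes "ignored_large N g f A" "j \<in> N - A" "0 \<le> g j"
  shows "card A = f \<and> (\<forall>l\<in>A. g j \<le> g l)"
  using assms unfolding ignored_large_def by auto

lemma card_ignored_small_le: "ignored_small N g f B \<Longrightarrow> card B \<le> f"
  unfolding ignored_small_def by auto

lemma kept_if_many_below:
  assumes fin: "finite N" and L: "ignored_large N g f A" and S: "ignored_small N g f B"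
    and Low: "Low \<subseteq> N" "f + 1 \<le> card Low" "\<forall>j\<in>Low. g j < 0"
  shows "\<exists>j\<in>Low. j \<notin> A \<union> B"
proof (rule ccontr)
  assume "\<not> ?thesis"
  then have Low_ignored: "Low \<subseteq> A \<union> B" by auto
  have "Low \<inter> A = {}"
  proof (rule ccontr)
    assume "Low \<inter> A \<noteq> {}"
    then obtain j where j: "j \<in> Low" "j \<in> A" by auto
    let ?P = "{l \<in> N. 0 \<le> g l}"
    have "j \<notin> ?P" using j Low(3) by auto
    then have many: "f \<le> card ?P" and cA: "card A = f" and top: "\<forall>a\<in>A. \<forall>b\<in>N - A. g b \<le> g a"
      using L j unfolding ignored_large_def by auto
    \<comment> \<open>a nonnegative value outside A would have to lie below g j < 0\<close>
    have "?P \<subseteq> A - {j}"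
    proof
      fix b assume b: "b \<in> ?P"
      have "g j < 0" using j Low(3) by blast
      then have "b \<in> A" using top j(2) b by force
      moreover have "b \<noteq> j" using b \<open>g j < 0\<close> by auto
      ultimately show "b \<in> A - {j}" by simp
    qed
    then have "card ?P \<le> card (A - {j})"
      using fin ignored_large_subset[OF L] by (intro card_mono) (auto intro: finite_subset)
    also have "\<dots> < f"
    proof -
      have "finite A" using fin ignored_large_subset[OF L] finite_subset by blast
      then have "0 < f" using cA j(2) card_gt_0_iff by blast
      then show ?thesis using cA j(2) by (simp add: card_Diff_singleton)
    qed
    finally show False using many by simp
  qed
  then have "card Low \<le> card B"
    using Low_ignored fin ignored_small_subset[OF S] by (intro card_mono) (auto intro: finite_subset)
  then show False using card_ignored_small_le[OF S] Low(2) by simp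
qed

lemma ignored_nonempty:
  assumes "1 \<le> f" "N \<noteq> {}" "ignored_large N g f A" "ignored_small N g f B"
  shows "A \<union> B \<noteq> {}"
  using assms unfolding ignored_large_def ignored_small_def by fastforce

lemma dpmsr_ignored_zero:
  fixes E :: "('v::finite \<times> 'v) set"
  shows "dpmsr_ignored E 0 xk i R \<Longrightarrow> R = {}"
  unfolding dpmsr_ignored_def ignored_large_def ignored_small_def
  by (auto dest: finite_subset[OF _ finite])

lemma card_positive_if_kept:
  assumes fin: "finite N" and L: "ignored_large N g f A" and l: "l \<in> N - A" "0 < g l"
  shows "f + 1 \<le> card {j \<in> N. 0 < g j}"
proof -
  have cA: "card A = f" and above: "\<forall>a\<in>A. g l \<le> g a"
    using ignored_large_above_kept[OF L l(1)] l(2) by auto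
  have "finite A" using fin ignored_large_subset[OF L] finite_subset by blast
  then have "card (insert l A) = f + 1" using cA l(1) by simp
  moreover have "insert l A \<subseteq> {j \<in> N. 0 < g j}"
    using above l ignored_large_subset[OF L] by fastforce
  ultimately show ?thesis using fin card_mono[of "{j \<in> N. 0 < g j}" "insert l A"] by simp
qed

lemma kept_value_zero:
  assumes fin: "finite N" and L: "ignored_large N g f A" and S: "ignored_small N g f B"
    and few: "card {j \<in> N. g j \<noteq> 0} \<le> f" and l: "l \<in> N - (A \<union> B)"
  shows "g l = 0"
proof (rule ccontr)
  assume "g l \<noteq> 0"
  then consider "0 < g l" | "0 < - g l" by linarith
  then have "f + 1 \<le> card {j \<in> N. 0 < g j} \<or> f + 1 \<le> card {j \<in> N. 0 < - g j}"
  proof cases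
    case 1
    then show ?thesis using card_positive_if_kept[OF fin L] l by blast
  next
    case 2
    have "ignored_large N (\<lambda>j. - g j) f B" using S by (simp add: ignored_large_uminus_iff)
    then show ?thesis using card_positive_if_kept[OF fin, of "\<lambda>j. - g j"] l 2 by blast
  qed
  moreover have "card {j \<in> N. 0 < g j} \<le> card {j \<in> N. g j \<noteq> 0}"
    and "card {j \<in> N. 0 < - g j} \<le> card {j \<in> N. g j \<noteq> 0}"
    using fin by (auto intro: card_mono)
  ultimately show False using few by linarith
qed

lemma kept_le_normal:
  fixes E :: "('v::finite \<times> 'v) set"
  assumes R: "dpmsr_ignored E f xk i R" and M: "card M \<le> f" "i \<notin> M"
    and j: "j \<in> in_nbrs E i - R"
  shows "\<exists>l. l \<notin> M \<and> xk j \<le> xk l"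
proof (cases "xk j \<le> xk i \<or> j \<notin> M")
  case True
  then show ?thesis using M(2) by auto
next
  case False
  obtain A B where L: "ignored_large (in_nbrs E i) (\<lambda>j. xk j - xk i) f A" and "R = A \<union> B"
    using R unfolding dpmsr_ignored_def by blast
  then have cA: "card A = f" and above: "\<forall>l\<in>A. xk j \<le> xk l"
    using ignored_large_above_kept[OF L, of j] j False by auto
  \<comment> \<open>A has f elements and misses the malicious j, so it cannot consist of malicious agents only\<close>
  have "\<not> A \<subseteq> M"
  proof
    assume "A \<subseteq> M"
    then have "card (insert j A) \<le> card M" using False by (intro card_mono) auto
    then show False using cA M(1) j \<open>R = A \<union> B\<close> by (simp add: card_insert_if)
  qed
  then show ?thesis using above by blast
qed

section \<open>Robust digraphs\<close>

definition in_closed :: "('v \<times> 'v) set \<Rightarrow> 'v set \<Rightarrow> bool" where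
  "in_closed E S \<longleftrightarrow> (\<forall>i\<in>S. \<forall>j. (j, i) \<in> E \<longrightarrow> j \<in> S)"

lemma reach_set_in_closed:
  assumes "in_closed E S"
  shows "reach_set E 1 S = {}"
proof -
  have "card {j. (j, i) \<in> E \<and> j \<notin> S} = 0" if "i \<in> S" for i
  proof -
    have "{j. (j, i) \<in> E \<and> j \<notin> S} = {}" using assms that unfolding in_closed_def by blast
    then show ?thesis by (metis card.empty)
  qed
  then show ?thesis unfolding reach_set_def by fastforce
qed

lemma robust_in_closed_meet:
  assumes "rs_robust E 1 1" "in_closed E S1" "in_closed E S2" "S1 \<noteq> {}" "S2 \<noteq> {}"
  shows "S1 \<inter> S2 \<noteq> {}"
proof
  assume "S1 \<inter> S2 = {}"
  then have "reach_set E 1 S1 = S1 \<or> reach_set E 1 S2 = S2 \<or>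
      1 \<le> card (reach_set E 1 S1) + card (reach_set E 1 S2)"
    using assms(1,4,5) unfolding rs_robust_def by blast
  then show False using reach_set_in_closed assms(2-5) by auto
qed

text \<open>A minimal nonempty in-closed set meets every set of ancestors, hence lies in all of them.\<close>
lemma robust_has_root:
  fixes E :: "('v::finite \<times> 'v) set"
  assumes rob: "rs_robust E 1 1"
  shows "\<exists>r. \<forall>i. (r, i) \<in> E\<^sup>*"
proof -
  define P where "P S \<longleftrightarrow> in_closed E S \<and> S \<noteq> {}" for S :: "'v set"
  have "P UNIV" unfolding P_def in_closed_def by auto
  then obtain C where C: "P C" "\<forall>S. P S \<longrightarrow> card C \<le> card S"
    using ex_has_least_nat[of P UNIV card] by blast
  have "C \<subseteq> {j. (j, u) \<in> E\<^sup>*}" for u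
  proof -
    define A where "A = {j. (j, u) \<in> E\<^sup>*}"
    have "in_closed E A" "u \<in> A"
      unfolding in_closed_def A_def by (auto intro: converse_rtrancl_into_rtrancl)
    then have "P (A \<inter> C)"
      using robust_in_closed_meet[OF rob] C(1) unfolding P_def in_closed_def by blast
    then have "card C \<le> card (A \<inter> C)" using C(2) by blast
    moreover have "card (A \<inter> C) \<le> card C" by (rule card_mono) auto
    ultimately have "A \<inter> C = C" by (intro card_subset_eq) auto
    then show ?thesis unfolding A_def by blast
  qed
  moreover obtain r where "r \<in> C" using C(1) unfolding P_def by blast
  ultimately show ?thesis by blast
qed

lemma robust_normal_in_reach:
  fixes E :: "('v::finite \<times> 'v) set"
  assumes rob: "rs_robust E (f + 1) (f + 1)" and M: "card M \<le> f"
    and S: "S1 - M \<noteq> {}" "S2 - M \<noteq> {}" "S1 \<inter> S2 = {}"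
  shows "\<exists>i. i \<notin> M \<and> i \<in> reach_set E (f + 1) S1 \<union> reach_set E (f + 1) S2"
proof -
  let ?X1 = "reach_set E (f + 1) S1" and ?X2 = "reach_set E (f + 1) S2"
  have "?X1 = S1 \<or> ?X2 = S2 \<or> f + 1 \<le> card ?X1 + card ?X2"
    using rob S unfolding rs_robust_def by blast
  then consider "?X1 = S1" | "?X2 = S2" | "f + 1 \<le> card (?X1 \<union> ?X2)"
    using S(3) card_Un_disjoint[of ?X1 ?X2] unfolding reach_set_def by fastforce
  then show ?thesis
  proof cases
    case 3
    have "\<not> ?X1 \<union> ?X2 \<subseteq> M"
    proof
      assume "?X1 \<union> ?X2 \<subseteq> M"
      then have "card (?X1 \<union> ?X2) \<le> card M" by (intro card_mono) auto
      then show False using 3 M by simp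
    qed
    then show ?thesis by blast
  qed (use S(1,2) in blast)+
qed

lemma shrinking_pair_empty:
  fixes H L :: "nat \<Rightarrow> 'a::finite set"
  assumes H: "\<And>l. H (Suc l) \<subseteq> H l" and L: "\<And>l. L (Suc l) \<subseteq> L l"
    and strict: "\<And>l. H l \<noteq> {} \<Longrightarrow> L l \<noteq> {} \<Longrightarrow> H (Suc l) \<subset> H l \<or> L (Suc l) \<subset> L l"
  shows "H (2 * CARD('a)) = {} \<or> L (2 * CARD('a)) = {}"
proof -
  have size: "H l = {} \<or> L l = {} \<or> card (H l) + card (L l) + l \<le> card (H 0) + card (L 0)" for l
  proof (induction l)
    case (Suc l)
    show ?case
    proof (cases "H l = {} \<or> L l = {}")
      case True
      then show ?thesis using H[of l] L[of l] by blast
    next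
      case False
      then have IH: "card (H l) + card (L l) + l \<le> card (H 0) + card (L 0)" using Suc.IH by blast
      have "card (H (Suc l)) \<le> card (H l)" "card (L (Suc l)) \<le> card (L l)"
        using H[of l] L[of l] by (simp_all add: card_mono)
      moreover have "card (H (Suc l)) < card (H l) \<or> card (L (Suc l)) < card (L l)"
        using strict[of l] False by (auto intro: psubset_card_mono)
      ultimately show ?thesis using IH by linarith
    qed
  qed simp
  have "card (H 0) \<le> CARD('a)" "card (L 0) \<le> CARD('a)" by (simp_all add: card_mono)
  then have "card (H (2 * CARD('a))) = 0 \<or> card (L (2 * CARD('a))) = 0 \<or>
      H (2 * CARD('a)) = {} \<or> L (2 * CARD('a)) = {}"
    using size[of "2 * CARD('a)"] by linarith
  then show ?thesis by auto
qed

section \<open>Lagged supersolutions on rooted digraphs\<close>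

text \<open>Satisfied, when f = 0, by the gaps between the normal positions and the ends of a window
  (every neighbour is then kept).\<close>
definition lagged_supersolution :: "('v \<times> 'v) set \<Rightarrow> real \<Rightarrow> (nat \<Rightarrow> 'v \<Rightarrow> real) \<Rightarrow> bool" where
  "lagged_supersolution E \<zeta> e \<longleftrightarrow>
     (\<forall>s i j. (j, i) \<in> E \<longrightarrow> \<zeta> * e (Suc s) j \<le> e (Suc (Suc s)) i \<and> \<zeta> * e s j \<le> e (Suc (Suc s)) i) \<and>
     (\<forall>s i. in_nbrs E i = {} \<longrightarrow> \<zeta> * e (Suc s) i \<le> e (Suc (Suc s)) i)"

lemma lagged_supersolution_walk:
  assumes sup: "lagged_supersolution E \<zeta> e" and \<zeta>: "0 < \<zeta>" "\<zeta> \<le> 1" and B: "0 \<le> B"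
  shows "(y0, y) \<in> E ^^ m \<Longrightarrow> 1 \<le> t0 \<Longrightarrow> \<zeta> ^ t0 * B \<le> e t0 y0 \<Longrightarrow>
    t0 + m \<le> t \<Longrightarrow> t \<le> t0 + 2 * m \<Longrightarrow> \<zeta> ^ t * B \<le> e t y"
proof (induction m arbitrary: y t)
  case 0
  then show ?case by simp
next
  case (Suc m)
  obtain z where z: "(y0, z) \<in> E ^^ m" "(z, y) \<in> E" using Suc.prems(1) by (rule relpow_Suc_E)
  have "2 \<le> t" using Suc.prems(2,4) by simp
  define s where "s = t - 2"
  with \<open>2 \<le> t\<close> have t: "t = Suc (Suc s)" by simp
  define t' where "t' = (if Suc s \<le> t0 + 2 * m then Suc s else s)"
  have t': "t0 + m \<le> t'" "t' \<le> t0 + 2 * m" "Suc t' \<le> t"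
    using Suc.prems(4,5) t unfolding t'_def by auto
  have edge: "\<zeta> * e (Suc s) z \<le> e t y" "\<zeta> * e s z \<le> e t y"
    using sup z(2) t unfolding lagged_supersolution_def by blast+
  have "\<zeta> ^ t * B \<le> \<zeta> ^ Suc t' * B"
    using t'(3) \<zeta> B by (intro mult_right_mono power_decreasing) auto
  also have "\<dots> \<le> \<zeta> * e t' z"
    using Suc.IH[OF z(1) Suc.prems(2,3) t'(1,2)] \<zeta> by (simp add: mult_left_mono)
  also have "\<dots> \<le> e t y"
    using edge unfolding t'_def by simp
  finally show ?case .
qed

lemma lagged_supersolution_root:
  fixes E :: "('v \<times> 'v) set"
  assumes root: "\<forall>i. (r, i) \<in> E\<^sup>*"
  shows "\<exists>N\<ge>1. \<forall>\<zeta> e. 0 < \<zeta> \<longrightarrow> \<zeta> \<le> 1 \<longrightarrow> 0 \<le> e 1 r \<longrightarrow> lagged_supersolution E \<zeta> e \<longrightarrow>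
     (\<forall>t\<ge>N. \<zeta> ^ t * e 1 r \<le> e t r)"
proof (cases "in_nbrs E r = {}")
  case True
  have "\<zeta> ^ t * e 1 r \<le> e t r"
    if "0 < \<zeta>" "\<zeta> \<le> 1" "0 \<le> e 1 r" "lagged_supersolution E \<zeta> e" "1 \<le> t" for \<zeta> e t
    using that(5)
  proof (induction t rule: dec_induct)
    case base
    then show ?case using that(1-3) by (simp add: mult_left_le_one_le)
  next
    case (step t)
    then obtain s where "t = Suc s" by (cases t) auto
    then have "\<zeta> * e t r \<le> e (Suc t) r"
      using that(4) True unfolding lagged_supersolution_def by simp
    moreover have "\<zeta> * (\<zeta> ^ t * e 1 r) \<le> \<zeta> * e t r"
      using step.IH that(1) by (simp add: mult_left_mono)
    ultimately show ?case by simp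
  qed
  then show ?thesis by (intro exI[of _ 1]) simp
next
  case False
  \<comment> \<open>r lies on a cycle of length c, which carries the bound forward in steps of c\<close>
  then obtain j where "(j, r) \<in> E" unfolding in_nbrs_def by auto
  moreover obtain m where "(r, j) \<in> E ^^ m" using root rtrancl_imp_relpow by blast
  ultimately have cyc: "(r, r) \<in> E ^^ Suc m" by (intro relpow_Suc_I)
  define c where "c = Suc m"
  have "\<zeta> ^ t * e 1 r \<le> e t r"
    if "0 < \<zeta>" "\<zeta> \<le> 1" "0 \<le> e 1 r" "lagged_supersolution E \<zeta> e" "Suc c \<le> t" for \<zeta> e t
    using that(5)
  proof (induction t rule: less_induct)
    case (less t)
    note walk = lagged_supersolution_walk[OF that(4,1,2,3) cyc[folded c_def]]
    show ?case
    proof (cases "t \<le> 1 + 2 * c")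
      case True
      have "\<zeta> ^ 1 * e 1 r \<le> e 1 r" using that(1-3) by (simp add: mult_left_le_one_le)
      then show ?thesis using walk[of 1 t] True less.prems by simp
    next
      case False
      have "\<zeta> ^ (t - c) * e 1 r \<le> e (t - c) r" using less.IH[of "t - c"] False c_def by simp
      then show ?thesis using walk[of "t - c" t] False c_def by simp
    qed
  qed
  then show ?thesis by (intro exI[of _ "Suc c"]) simp
qed

lemma lagged_supersolution_spread:
  fixes E :: "('v::finite \<times> 'v) set"
  assumes root: "\<forall>i. (r, i) \<in> E\<^sup>*"
  shows "\<exists>N. \<forall>\<zeta> e. 0 < \<zeta> \<longrightarrow> \<zeta> \<le> 1 \<longrightarrow> 0 \<le> e 1 r \<longrightarrow> lagged_supersolution E \<zeta> e \<longrightarrow>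
     (\<forall>i t. N \<le> t \<longrightarrow> \<zeta> ^ t * e 1 r \<le> e t i)"
proof -
  obtain T0 where T0: "1 \<le> T0" and at_root: "\<forall>\<zeta> e. 0 < \<zeta> \<longrightarrow> \<zeta> \<le> 1 \<longrightarrow> 0 \<le> e 1 r \<longrightarrow>
      lagged_supersolution E \<zeta> e \<longrightarrow> (\<forall>t\<ge>T0. \<zeta> ^ t * e 1 r \<le> e t r)"
    using lagged_supersolution_root[OF root] by blast
  define m where "m i = (SOME m. (r, i) \<in> E ^^ m)" for i
  have m: "(r, i) \<in> E ^^ m i" for i
    unfolding m_def using root rtrancl_imp_relpow by (metis someI_ex)
  define D where "D = Max (range m)"
  have m_le: "m i \<le> D" for i unfolding D_def by simp
  show ?thesis
  proof (intro exI[of _ "T0 + D"] allI impI)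
    fix \<zeta> :: real and e :: "nat \<Rightarrow> 'v \<Rightarrow> real" and i t
    assume \<zeta>: "0 < \<zeta>" "\<zeta> \<le> 1" and B: "0 \<le> e 1 r" and sup: "lagged_supersolution E \<zeta> e"
      and t: "T0 + D \<le> t"
    have "\<zeta> ^ (t - m i) * e 1 r \<le> e (t - m i) r"
      using at_root \<zeta> B sup t m_le[of i] by auto
    then show "\<zeta> ^ t * e 1 r \<le> e t i"
      using lagged_supersolution_walk[OF sup \<zeta> B m[of i], of "t - m i" t] T0 t m_le[of i] by simp
  qed
qed

lemma execution_uminus:
  assumes ex: "execution E a f \<alpha> T M x v"
  shows "execution E a f \<alpha> T M (\<lambda>k i. - x k i) (\<lambda>k i. - v k i)"
  unfolding execution_def
proof (intro allI)
  fix k i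
  obtain u where x1: "x (Suc k) i = x k i + T * v k i + T\<^sup>2 / 2 * u" and v1: "v (Suc k) i = v k i + T * u"
    and law: "i \<notin> M \<longrightarrow> (\<exists>R. dpmsr_ignored E f (x k) i R \<and>
      u = - (\<Sum>j \<in> in_nbrs E i - R. a i j * (x k i - x k j)) - \<alpha> * v k i)"
    using ex unfolding execution_def by blast
  have "(\<Sum>j\<in>S. a i j * (- x k i - - x k j)) = - (\<Sum>j\<in>S. a i j * (x k i - x k j))" for S
    by (simp add: sum_negf[symmetric] algebra_simps)
  then show "\<exists>u. - x (Suc k) i = - x k i + T * - v k i + T\<^sup>2 / 2 * u \<and> - v (Suc k) i = - v k i + T * u \<and>
      (i \<notin> M \<longrightarrow> (\<exists>R. dpmsr_ignored E f (\<lambda>i. - x k i) i R \<and>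
        u = - (\<Sum>j\<in>in_nbrs E i - R. a i j * (- x k i - - x k j)) - \<alpha> * - v k i))"
    using x1 v1 law unfolding dpmsr_ignored_uminus_iff by (intro exI[of _ "- u"]) auto
qed

lemma execution_exists:
  fixes E :: "('v::finite \<times> 'v) set"
  obtains x v where "x 0 = x_init" "v 0 = v_init" "execution E a f \<alpha> T M x v"
    "\<forall>k. \<forall>i\<in>M. x (Suc k) i = x k i + T * v k i \<and> v (Suc k) i = v k i"
proof -
  define R where "R xk i = (SOME R. dpmsr_ignored E f xk i R)" for xk i
  define u where "u xk vk i = (if i \<in> M then 0
    else - (\<Sum>j \<in> in_nbrs E i - R xk i. a i j * (xk i - xk j)) - \<alpha> * vk i)" for xk vk i
  define step where "step p = (\<lambda>i. fst p i + T * snd p i + T\<^sup>2 / 2 * u (fst p) (snd p) i,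
    \<lambda>i. snd p i + T * u (fst p) (snd p) i)" for p :: "('v \<Rightarrow> real) \<times> ('v \<Rightarrow> real)"
  define st where "st k = (step ^^ k) (x_init, v_init)" for k
  have R: "dpmsr_ignored E f xk i (R xk i)" for xk i
    unfolding R_def using dpmsr_ignored_exists by (rule someI_ex)
  define x where "x k = fst (st k)" for k
  define v where "v k = snd (st k)" for k
  have x: "x (Suc k) i = x k i + T * v k i + T\<^sup>2 / 2 * u (x k) (v k) i"
    and v: "v (Suc k) i = v k i + T * u (x k) (v k) i" for k i
    unfolding x_def v_def st_def step_def by simp_all
  have "x (Suc k) i = x k i + T * v k i + T\<^sup>2 / 2 * u (x k) (v k) i \<and>
      v (Suc k) i = v k i + T * u (x k) (v k) i \<and>
      (i \<notin> M \<longrightarrow> (\<exists>R. dpmsr_ignored E f (x k) i R \<and>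
        u (x k) (v k) i = - (\<Sum>j \<in> in_nbrs E i - R. a i j * (x k i - x k j)) - \<alpha> * v k i))" for k i
    using x v R[of "x k" i] unfolding u_def by auto
  then have "execution E a f \<alpha> T M x v" unfolding execution_def by blast
  moreover have "x 0 = x_init" "v 0 = v_init" unfolding x_def v_def st_def by simp_all
  moreover have "\<forall>k. \<forall>i\<in>M. x (Suc k) i = x k i + T * v k i \<and> v (Suc k) i = v k i"
    using x v unfolding u_def by simp
  ultimately show ?thesis using that by blast
qed

text \<open>A value differing from c can only come from one of the at most f in-neighbours outside S,
  so DP-MSR discards it.\<close>
lemma execution_freezes_group:
  fixes E :: "('v::finite \<times> 'v) set"
  assumes ex: "execution E a f \<alpha> T M x v"
    and malicious_idle: "\<forall>k. \<forall>i\<in>M. x (Suc k) i = x k i + T * v k i \<and> v (Suc k) i = v k i"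
    and few: "\<forall>j\<in>S - M. card {l. (l, j) \<in> E \<and> l \<notin> S} \<le> f"
    and init: "\<forall>j\<in>S. x 0 j = c \<and> v 0 j = 0"
  shows "\<forall>j\<in>S. x k j = c \<and> v k j = 0"
proof (induction k)
  case 0
  then show ?case using init by simp
next
  case (Suc k)
  show ?case
  proof
    fix j
    assume j: "j \<in> S"
    show "x (Suc k) j = c \<and> v (Suc k) j = 0"
    proof (cases "j \<in> M")
      case True
      then show ?thesis using malicious_idle Suc.IH j by simp
    next
      case False
      obtain u R where step: "x (Suc k) j = x k j + T * v k j + T\<^sup>2 / 2 * u" "v (Suc k) j = v k j + T * u"
        and R: "dpmsr_ignored E f (x k) j R"
        and u: "u = - (\<Sum>l \<in> in_nbrs E j - R. a j l * (x k j - x k l)) - \<alpha> * v k j"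
        using ex False unfolding execution_def by blast
      obtain A B where L: "ignored_large (in_nbrs E j) (\<lambda>l. x k l - x k j) f A"
        and Sm: "ignored_small (in_nbrs E j) (\<lambda>l. x k l - x k j) f B" and "R = A \<union> B"
        using R unfolding dpmsr_ignored_def by blast
      have "{l \<in> in_nbrs E j. x k l - x k j \<noteq> 0} \<subseteq> {l. (l, j) \<in> E \<and> l \<notin> S}"
        using Suc.IH j unfolding in_nbrs_def by auto
      then have "card {l \<in> in_nbrs E j. x k l - x k j \<noteq> 0} \<le> card {l. (l, j) \<in> E \<and> l \<notin> S}"
        by (rule card_mono[OF finite])
      moreover have "card {l. (l, j) \<in> E \<and> l \<notin> S} \<le> f" using few j False by blast
      ultimately have few_nonzero: "card {l \<in> in_nbrs E j. x k l - x k j \<noteq> 0} \<le> f" by linarith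
      have "x k l - x k j = 0" if "l \<in> in_nbrs E j - R" for l
        using that \<open>R = A \<union> B\<close> by (intro kept_value_zero[OF finite L Sm few_nonzero]) blast
      then have "u = 0" using u Suc.IH j by simp
      then show ?thesis using step Suc.IH j by simp
    qed
  qed
qed

section \<open>Sufficiency\<close>

lemma decseq_tendsto_zero_if_contracts:
  fixes D :: "nat \<Rightarrow> real"
  assumes dec: "decseq D" and nonneg: "\<And>k. 0 \<le> D k"
    and \<delta>: "0 < \<delta>" "\<delta> \<le> 1" and contr: "\<And>k. D (k + N) \<le> (1 - \<delta>) * D k"
  shows "D \<longlonglongrightarrow> 0"
proof (rule LIMSEQ_I)
  fix r :: real
  assume r: "0 < r"
  have "D (m * N) \<le> (1 - \<delta>) ^ m * D 0" for m
  proof (induction m)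
    case (Suc m)
    have "D (Suc m * N) \<le> (1 - \<delta>) * D (m * N)" using contr[of "m * N"] by (simp add: add.commute)
    also have "\<dots> \<le> (1 - \<delta>) * ((1 - \<delta>) ^ m * D 0)" using Suc.IH \<delta> by (intro mult_left_mono) auto
    finally show ?case by simp
  qed simp
  moreover have "(\<lambda>m. (1 - \<delta>) ^ m * D 0) \<longlonglongrightarrow> 0"
    using \<delta> by (intro tendsto_mult_left_zero LIMSEQ_realpow_zero) auto
  then obtain m where "norm ((1 - \<delta>) ^ m * D 0 - 0) < r"
    using LIMSEQ_D[OF _ r] by blast
  then have "(1 - \<delta>) ^ m * D 0 < r" by simp
  ultimately have "D n < r" if "m * N \<le> n" for n
    using dec that unfolding decseq_def by (meson order.trans order.strict_trans1)
  then show "\<exists>n0. \<forall>n\<ge>n0. norm (D n - 0) < r" using nonneg by auto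
qed

locale dpmsr_run =
  fixes E :: "('v::finite \<times> 'v) set" and a :: "'v \<Rightarrow> 'v \<Rightarrow> real"
    and \<gamma> T \<alpha> :: real and f :: nat and M :: "'v set" and x v :: "nat \<Rightarrow> 'v \<Rightarrow> real"
  assumes gamma_pos: "0 < \<gamma>"
    and weights: "\<forall>i j. (j, i) \<in> E \<longrightarrow> \<gamma> \<le> a i j"
    and weight_sum: "\<forall>i. (\<Sum>j \<in> in_nbrs E i. a i j) \<le> 1"
    and T_pos: "0 < T"
    and cond_lo: "1 + T\<^sup>2 / 2 \<le> \<alpha> * T"
    and cond_hi: "\<alpha> * T \<le> 2 - T\<^sup>2 / 2"
    and exec: "execution E a f \<alpha> T M x v"
    and card_M: "card M \<le> f"
    and M_proper: "M \<noteq> UNIV"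
begin

definition "h = T\<^sup>2 / 2"
definition "\<kappa> = T - \<alpha> * T\<^sup>2 / 2"
definition "\<eta> = h * min \<gamma> 1"

lemma h_pos: "0 < h"
  using T_pos unfolding h_def by simp

lemma h_le_half: "h \<le> 1 / 2"
  using cond_lo cond_hi unfolding h_def by simp

lemma \<kappa>_pos: "0 < \<kappa>"
proof -
  have "0 < 2 - \<alpha> * T"
    using cond_hi T_pos zero_less_power[of T 2] by linarith
  then have "0 < T * (2 - \<alpha> * T)" using T_pos by simp
  moreover have "\<kappa> = T * (2 - \<alpha> * T) / 2" unfolding \<kappa>_def by (simp add: power2_eq_square algebra_simps)
  ultimately show ?thesis by simp
qed

lemma \<eta>_pos: "0 < \<eta>"
  unfolding \<eta>_def using h_pos gamma_pos by simp

lemma \<eta>_le_h: "\<eta> \<le> h"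
  unfolding \<eta>_def using h_pos by (simp add: mult_left_le)

lemma \<eta>_le_one: "\<eta> \<le> 1"
  using \<eta>_le_h h_le_half by simp

lemma weight_ge: "j \<in> in_nbrs E i \<Longrightarrow> \<gamma> \<le> a i j"
  using weights unfolding in_nbrs_def by auto

lemma weight_nonneg: "j \<in> in_nbrs E i \<Longrightarrow> 0 \<le> a i j"
  using weight_ge gamma_pos by force

definition ignored :: "nat \<Rightarrow> 'v \<Rightarrow> 'v set" where
  "ignored k i = (SOME R. dpmsr_ignored E f (x k) i R \<and>
     (\<exists>u. x (Suc k) i = x k i + T * v k i + T\<^sup>2 / 2 * u \<and> v (Suc k) i = v k i + T * u \<and>
          u = - (\<Sum>j \<in> in_nbrs E i - R. a i j * (x k i - x k j)) - \<alpha> * v k i))"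

definition "kept k i = in_nbrs E i - ignored k i"
definition "kept_weight k i = (\<Sum>j\<in>kept k i. a i j)"
definition "kept_moment k i = (\<Sum>j\<in>kept k i. a i j * x k j)"

lemma ignored:
  assumes "i \<notin> M"
  shows "dpmsr_ignored E f (x k) i (ignored k i) \<and>
    (\<exists>u. x (Suc k) i = x k i + T * v k i + T\<^sup>2 / 2 * u \<and> v (Suc k) i = v k i + T * u \<and>
         u = - (\<Sum>j \<in> kept k i. a i j * (x k i - x k j)) - \<alpha> * v k i)"
proof -
  let ?P = "\<lambda>R. dpmsr_ignored E f (x k) i R \<and>
    (\<exists>u. x (Suc k) i = x k i + T * v k i + T\<^sup>2 / 2 * u \<and> v (Suc k) i = v k i + T * u \<and>
         u = - (\<Sum>j \<in> in_nbrs E i - R. a i j * (x k i - x k j)) - \<alpha> * v k i)"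
  obtain u where "x (Suc k) i = x k i + T * v k i + T\<^sup>2 / 2 * u" "v (Suc k) i = v k i + T * u"
    "i \<notin> M \<longrightarrow> (\<exists>R. dpmsr_ignored E f (x k) i R \<and>
        u = - (\<Sum>j \<in> in_nbrs E i - R. a i j * (x k i - x k j)) - \<alpha> * v k i)"
    using exec unfolding execution_def by blast
  then have "\<exists>R. ?P R" using assms by blast
  then have "?P (ignored k i)" unfolding ignored_def by (rule someI_ex)
  then show ?thesis unfolding kept_def .
qed

lemma kept_subset: "kept k i \<subseteq> in_nbrs E i"
  unfolding kept_def by auto

lemma kept_weight_nonneg_member: "j \<in> kept k i \<Longrightarrow> 0 \<le> a i j"
  using kept_subset weight_nonneg by blast

lemma kept_weight_nonneg: "0 \<le> kept_weight k i"
  unfolding kept_weight_def using kept_subset weight_nonneg by (intro sum_nonneg) blast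

lemma kept_weight_le_one: "kept_weight k i \<le> 1"
proof -
  have "kept_weight k i \<le> (\<Sum>j \<in> in_nbrs E i. a i j)"
    unfolding kept_weight_def using kept_subset weight_nonneg by (intro sum_mono2) auto
  also have "\<dots> \<le> 1" using weight_sum by blast
  finally show ?thesis .
qed

lemma normal_step:
  fixes k :: nat
  assumes i: "i \<notin> M"
  defines "s \<equiv> kept_weight k i * x k i - kept_moment k i"
  shows "x (Suc k) i = x k i + \<kappa> * v k i - h * s"
    and "v (Suc k) i = (1 - \<alpha> * T) * v k i - T * s"
proof -
  have "(\<Sum>j \<in> kept k i. a i j * (x k i - x k j)) = s"
    unfolding s_def kept_weight_def kept_moment_def
    by (simp add: right_diff_distrib sum_subtractf sum_distrib_right)
  then obtain u where x1: "x (Suc k) i = x k i + T * v k i + T\<^sup>2 / 2 * u"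
    and v1: "v (Suc k) i = v k i + T * u" and u: "u = - s - \<alpha> * v k i"
    using ignored[OF i, of k] by auto
  show "x (Suc k) i = x k i + \<kappa> * v k i - h * s"
    unfolding x1 u \<kappa>_def h_def by (simp add: field_simps)
  show "v (Suc k) i = (1 - \<alpha> * T) * v k i - T * s"
    unfolding v1 u by (simp add: algebra_simps)
qed

definition "coef1 k i = 2 - \<alpha> * T - h * kept_weight k i"
definition "coef0 k i = \<alpha> * T - 1 - h * kept_weight k i"

lemma coef1_ge: "h * (1 - kept_weight k i) \<le> coef1 k i"
  using cond_hi unfolding coef1_def h_def by (simp add: algebra_simps)

lemma coef0_ge: "h * (1 - kept_weight k i) \<le> coef0 k i"
  using cond_lo unfolding coef0_def h_def by (simp add: algebra_simps)

lemma coef1_nonneg: "0 \<le> coef1 k i" and coef0_nonneg: "0 \<le> coef0 k i"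
proof -
  have "0 \<le> h * (1 - kept_weight k i)" using h_pos kept_weight_le_one[of k i] by simp
  then show "0 \<le> coef1 k i" "0 \<le> coef0 k i" using coef1_ge[of k i] coef0_ge[of k i] by linarith+
qed

text \<open>Eliminating the velocity gives a second-order recursion for the positions whose
  coefficients, including the kept weights, sum to one; the gap to any level W is therefore
  a nonnegative combination of earlier gaps once these are nonnegative.\<close>
lemma two_step_gap:
  assumes i: "i \<notin> M"
  shows "W - x (Suc (Suc k)) i = coef1 (Suc k) i * (W - x (Suc k) i)
      + h * (\<Sum>j\<in>kept (Suc k) i. a i j * (W - x (Suc k) j))
      + coef0 k i * (W - x k i) + h * (\<Sum>j\<in>kept k i. a i j * (W - x k j))"
proof -
  define s where "s k = kept_weight k i * x k i - kept_moment k i" for k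
  have gap_sum: "(\<Sum>j\<in>kept k i. a i j * (W - x k j)) = kept_weight k i * W - kept_moment k i" for k
    unfolding kept_weight_def kept_moment_def
    by (simp add: right_diff_distrib sum_subtractf sum_distrib_right)
  have x1: "x (Suc k) i = x k i + \<kappa> * v k i - h * s k"
    and v1: "v (Suc k) i = (1 - \<alpha> * T) * v k i - T * s k"
    and x2: "x (Suc (Suc k)) i = x (Suc k) i + \<kappa> * v (Suc k) i - h * s (Suc k)"
    using normal_step[OF i] unfolding s_def by blast+
  have elim: "(1 - \<alpha> * T) * h - \<kappa> * T = - h"
    unfolding h_def \<kappa>_def by (simp add: power2_eq_square field_simps)
  have "x (Suc (Suc k)) i
      = x (Suc k) i + (1 - \<alpha> * T) * (\<kappa> * v k i) - \<kappa> * T * s k - h * s (Suc k)"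
    using x2 v1 by (simp add: algebra_simps)
  also have "\<kappa> * v k i = x (Suc k) i - x k i + h * s k"
    using x1 by simp
  also have "x (Suc k) i + (1 - \<alpha> * T) * (x (Suc k) i - x k i + h * s k) - \<kappa> * T * s k - h * s (Suc k)
      = (2 - \<alpha> * T) * x (Suc k) i - (1 - \<alpha> * T) * x k i
        + ((1 - \<alpha> * T) * h - \<kappa> * T) * s k - h * s (Suc k)"
    by (simp add: algebra_simps)
  finally have "x (Suc (Suc k)) i = (2 - \<alpha> * T) * x (Suc k) i - (1 - \<alpha> * T) * x k i
      - h * s k - h * s (Suc k)"
    using elim by simp
  then show ?thesis
    unfolding gap_sum coef1_def coef0_def s_def by (simp add: algebra_simps)
qed

definition "normal_max k = Max ((\<lambda>j. x k j) ` (- M))"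
definition "normal_min k = Min ((\<lambda>j. x k j) ` (- M))"
definition "window_max k = max (normal_max k) (normal_max (Suc k))"
definition "window_min k = min (normal_min k) (normal_min (Suc k))"

lemma normal_nonempty: "- M \<noteq> {}"
  using M_proper by auto

lemma normal_max_le_iff: "normal_max k \<le> W \<longleftrightarrow> (\<forall>i. i \<notin> M \<longrightarrow> x k i \<le> W)"
  unfolding normal_max_def using normal_nonempty by (subst Max_le_iff) auto

lemma normal_min_ge_iff: "W \<le> normal_min k \<longleftrightarrow> (\<forall>i. i \<notin> M \<longrightarrow> W \<le> x k i)"
  unfolding normal_min_def using normal_nonempty by (subst Min_ge_iff) auto

lemma x_le_normal_max: "i \<notin> M \<Longrightarrow> x k i \<le> normal_max k"
  using normal_max_le_iff by blast

lemma normal_min_le_x: "i \<notin> M \<Longrightarrow> normal_min k \<le> x k i"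
  using normal_min_ge_iff by blast

lemma window_max_le_iff:
  "window_max k \<le> W \<longleftrightarrow> (\<forall>i. i \<notin> M \<longrightarrow> x k i \<le> W \<and> x (Suc k) i \<le> W)"
  unfolding window_max_def max.bounded_iff normal_max_le_iff by blast

lemma window_min_ge_iff:
  "W \<le> window_min k \<longleftrightarrow> (\<forall>i. i \<notin> M \<longrightarrow> W \<le> x k i \<and> W \<le> x (Suc k) i)"
  unfolding window_min_def min.bounded_iff normal_min_ge_iff by blast

lemma kept_in_normal_range:
  assumes i: "i \<notin> M" and j: "j \<in> kept k i"
  shows "normal_min k \<le> x k j" "x k j \<le> normal_max k"
proof -
  have R: "dpmsr_ignored E f (x k) i (ignored k i)"
    using ignored[OF i] by blast
  then have R': "dpmsr_ignored E f (\<lambda>j. - x k j) i (ignored k i)"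
    unfolding dpmsr_ignored_uminus_iff .
  obtain l where "l \<notin> M" "x k j \<le> x k l"
    using kept_le_normal[OF R card_M i] j unfolding kept_def by blast
  then show "x k j \<le> normal_max k" using x_le_normal_max[of l k] by linarith
  obtain l where "l \<notin> M" "- x k j \<le> - x k l"
    using kept_le_normal[OF R' card_M i] j unfolding kept_def by blast
  then show "normal_min k \<le> x k j" using normal_min_le_x[of l k] by linarith
qed

lemma kept_moment_bounds:
  assumes "i \<notin> M"
  shows "kept_weight k i * normal_min k \<le> kept_moment k i"
    and "kept_moment k i \<le> kept_weight k i * normal_max k"
  unfolding kept_weight_def kept_moment_def sum_distrib_right
  using kept_in_normal_range[OF assms, of _ k] kept_weight_nonneg_member
  by (intro sum_mono mult_left_mono; blast)+

lemma two_step_upper: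
  assumes i: "i \<notin> M" and W: "window_max k \<le> W"
  shows "x (Suc (Suc k)) i \<le> W - coef1 (Suc k) i * (W - x (Suc k) i)"
    and "j \<in> kept (Suc k) i \<Longrightarrow> x (Suc (Suc k)) i \<le> W - h * a i j * (W - x (Suc k) j)"
    and "j \<in> kept k i \<Longrightarrow> x (Suc (Suc k)) i \<le> W - h * a i j * (W - x k j)"
proof -
  have gap: "0 \<le> a i l * (W - x k' l)" if "k' = k \<or> k' = Suc k" "l \<in> kept k' i" for k' l
    using kept_in_normal_range(2)[OF i that(2)] W that kept_weight_nonneg_member
    unfolding window_max_def by (intro mult_nonneg_nonneg) auto
  have sum_ge: "h * a i j * (W - x k' j) \<le> h * (\<Sum>l\<in>kept k' i. a i l * (W - x k' l))"
    if "k' = k \<or> k' = Suc k" "j \<in> kept k' i" for k' j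
  proof -
    have "a i j * (W - x k' j) \<le> (\<Sum>l\<in>kept k' i. a i l * (W - x k' l))"
      using gap[OF that(1)] that(2) by (intro member_le_sum) auto
    then show ?thesis using h_pos by (simp add: mult.assoc)
  qed
  have "0 \<le> coef1 (Suc k) i * (W - x (Suc k) i)" "0 \<le> coef0 k i * (W - x k i)"
    using W i coef1_nonneg coef0_nonneg unfolding window_max_le_iff by auto
  moreover have "0 \<le> h * (\<Sum>l\<in>kept k' i. a i l * (W - x k' l))" if "k' = k \<or> k' = Suc k" for k'
    using h_pos gap[OF that] by (simp add: sum_nonneg)
  ultimately have nonneg: "0 \<le> coef1 (Suc k) i * (W - x (Suc k) i)" "0 \<le> coef0 k i * (W - x k i)"
    "0 \<le> h * (\<Sum>l\<in>kept (Suc k) i. a i l * (W - x (Suc k) l))"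
    "0 \<le> h * (\<Sum>l\<in>kept k i. a i l * (W - x k l))"
    by blast+
  show "x (Suc (Suc k)) i \<le> W - coef1 (Suc k) i * (W - x (Suc k) i)"
    using two_step_gap[OF i, of W k] nonneg by linarith
  show "j \<in> kept (Suc k) i \<Longrightarrow> x (Suc (Suc k)) i \<le> W - h * a i j * (W - x (Suc k) j)"
    using two_step_gap[OF i, of W k] nonneg sum_ge[of "Suc k" j] by linarith
  show "j \<in> kept k i \<Longrightarrow> x (Suc (Suc k)) i \<le> W - h * a i j * (W - x k j)"
    using two_step_gap[OF i, of W k] nonneg sum_ge[of k j] by linarith
qed

lemma x_le_window_max:
  assumes "k \<le> s" "i \<notin> M"
  shows "x s i \<le> window_max k"
proof -
  have "\<forall>i. i \<notin> M \<longrightarrow> x (k + t) i \<le> window_max k \<and> x (Suc (k + t)) i \<le> window_max k" for t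
  proof (induction t)
    case 0
    then show ?case using window_max_le_iff[of k "window_max k"] by simp
  next
    case (Suc t)
    then have W: "window_max (k + t) \<le> window_max k" using window_max_le_iff by blast
    have "x (Suc (Suc (k + t))) i \<le> window_max k" if i: "i \<notin> M" for i
    proof -
      have "0 \<le> coef1 (Suc (k + t)) i * (window_max k - x (Suc (k + t)) i)"
        using coef1_nonneg Suc.IH i by simp
      then show ?thesis using two_step_upper(1)[OF i W] by linarith
    qed
    then show ?case using Suc.IH by simp
  qed
  moreover obtain t where "s = k + t" using le_Suc_ex[OF assms(1)] by blast
  ultimately show ?thesis using assms(2) by blast
qed

lemma window_max_mono: "k \<le> s \<Longrightarrow> window_max s \<le> window_max k"
  unfolding window_max_le_iff using x_le_window_max by simp

text \<open>Negating all positions and velocities gives another run, so every lower bound below is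
  obtained from the corresponding upper bound for the negated run.\<close>
lemma uminus_run: "dpmsr_run E a \<gamma> T \<alpha> f M (\<lambda>k i. - x k i) (\<lambda>k i. - v k i)"
  unfolding dpmsr_run_def
  using gamma_pos weights weight_sum T_pos cond_lo cond_hi execution_uminus[OF exec] card_M M_proper
  by blast

lemma normal_max_uminus: "dpmsr_run.normal_max M (\<lambda>k i. - x k i) k = - normal_min k"
proof -
  interpret neg: dpmsr_run E a \<gamma> T \<alpha> f M "\<lambda>k i. - x k i" "\<lambda>k i. - v k i" by (rule uminus_run)
  show ?thesis
    unfolding neg.normal_max_def normal_min_def using normal_nonempty
    by (simp add: minus_Min_eq_Max image_image)
qed

lemma window_max_uminus: "dpmsr_run.window_max M (\<lambda>k i. - x k i) k = - window_min k"
proof -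
  interpret neg: dpmsr_run E a \<gamma> T \<alpha> f M "\<lambda>k i. - x k i" "\<lambda>k i. - v k i" by (rule uminus_run)
  show ?thesis
    unfolding neg.window_max_def window_min_def normal_max_uminus by (simp add: minus_min_eq_max)
qed

lemma window_min_le_x: "k \<le> s \<Longrightarrow> i \<notin> M \<Longrightarrow> window_min k \<le> x s i"
  using dpmsr_run.x_le_window_max[OF uminus_run, of k s i] by (simp add: window_max_uminus)

lemma window_min_mono: "k \<le> s \<Longrightarrow> window_min k \<le> window_min s"
  unfolding window_min_ge_iff using window_min_le_x by simp

definition "diam k = window_max k - window_min k"

lemma diam_nonneg: "0 \<le> diam k"
proof -
  obtain i where "i \<notin> M" using normal_nonempty by blast
  then show ?thesis using x_le_window_max[of k k i] window_min_le_x[of k k i] unfolding diam_def by simp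
qed

lemma window_max_initial:
  assumes B: "\<forall>i. i \<notin> M \<longrightarrow> \<kappa> * v 0 i \<le> B"
  shows "window_max 0 \<le> normal_max 0 + max 0 B"
proof -
  have "x (Suc 0) i \<le> normal_max 0 + B" if i: "i \<notin> M" for i
  proof -
    let ?w = "kept_weight 0 i"
    have "h * ?w \<le> h" using h_pos kept_weight_le_one[of 0 i] by (simp add: mult_left_le)
    then have "0 \<le> 1 - h * ?w" using h_le_half by linarith
    have "x (Suc 0) i = (1 - h * ?w) * x 0 i + h * kept_moment 0 i + \<kappa> * v 0 i"
      using normal_step(1)[OF i, of 0] by (simp add: algebra_simps)
    also have "\<dots> \<le> (1 - h * ?w) * normal_max 0 + h * (?w * normal_max 0) + B"
      using \<open>0 \<le> 1 - h * ?w\<close> x_le_normal_max[OF i] kept_moment_bounds(2)[OF i] h_pos B i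
      by (intro add_mono mult_left_mono) auto
    also have "\<dots> = normal_max 0 + B" by (simp add: algebra_simps)
    finally show ?thesis .
  qed
  then have "normal_max (Suc 0) \<le> normal_max 0 + B" using normal_max_le_iff by blast
  then show ?thesis unfolding window_max_def by simp
qed

lemma window_min_initial:
  assumes "\<forall>i. i \<notin> M \<longrightarrow> B \<le> \<kappa> * v 0 i"
  shows "normal_min 0 + min 0 B \<le> window_min 0"
  using dpmsr_run.window_max_initial[OF uminus_run, of "- B"] assms
  by (simp add: window_max_uminus normal_max_uminus max_def min_def split: if_splits)

lemma window_within_safety_interval:
  "{window_min 0..window_max 0} \<subseteq> safety_interval M \<alpha> T (x 0) (v 0)"
proof -
  have image: "{g i | i. i \<notin> M} = g ` (- M)" for g :: "'v \<Rightarrow> real" by auto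
  let ?V = "(\<lambda>i. \<kappa> * v 0 i) ` (- M)"
  have "\<forall>i. i \<notin> M \<longrightarrow> \<kappa> * v 0 i \<le> Max ?V" "\<forall>i. i \<notin> M \<longrightarrow> Min ?V \<le> \<kappa> * v 0 i"
    by (auto intro!: Max_ge Min_le)
  then have "window_max 0 \<le> normal_max 0 + max 0 (Max ?V)"
    and "normal_min 0 + min 0 (Min ?V) \<le> window_min 0"
    using window_max_initial window_min_initial by blast+
  moreover have "safety_interval M \<alpha> T (x 0) (v 0)
      = {normal_min 0 + min 0 (Min ?V) .. normal_max 0 + max 0 (Max ?V)}"
    unfolding safety_interval_def image normal_min_def normal_max_def \<kappa>_def ..
  ultimately show ?thesis by auto
qed

lemma \<eta>_le_weight: "j \<in> in_nbrs E i \<Longrightarrow> \<eta> \<le> h * a i j"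
  unfolding \<eta>_def using h_pos weight_ge[of j i] by (intro mult_left_mono) auto

lemma kept_weight_le_if_ignoring:
  assumes f: "1 \<le> f" and i: "i \<notin> M"
  shows "kept_weight k i \<le> 1 - min \<gamma> 1"
proof (cases "in_nbrs E i = {}")
  case True
  then show ?thesis using kept_subset[of k i] unfolding kept_weight_def by simp
next
  case False
  obtain A B where L: "ignored_large (in_nbrs E i) (\<lambda>j. x k j - x k i) f A"
    and S: "ignored_small (in_nbrs E i) (\<lambda>j. x k j - x k i) f B" and R: "ignored k i = A \<union> B"
    using ignored[OF i, of k] unfolding dpmsr_ignored_def by blast
  obtain r where r: "r \<in> ignored k i" using ignored_nonempty[OF f False L S] R by blast
  then have rN: "r \<in> in_nbrs E i"
    using R ignored_large_subset[OF L] ignored_small_subset[OF S] by blast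
  have "kept_weight k i \<le> (\<Sum>j\<in>in_nbrs E i - {r}. a i j)"
    unfolding kept_weight_def kept_def using r weight_nonneg by (intro sum_mono2) auto
  also have "\<dots> = (\<Sum>j\<in>in_nbrs E i. a i j) - a i r" using rN by (simp add: sum_diff1)
  also have "\<dots> \<le> 1 - \<gamma>" using weight_sum weight_ge[OF rN] by (smt (verit))
  finally show ?thesis by linarith
qed

lemma \<eta>_le_coef1: "1 \<le> f \<Longrightarrow> i \<notin> M \<Longrightarrow> \<eta> \<le> coef1 k i"
  using kept_weight_le_if_ignoring[of i k] coef1_ge[of k i] h_pos mult_left_mono[of _ _ h]
  unfolding \<eta>_def by (smt (verit))

text \<open>If f + 1 in-neighbours lie below W - \<epsilon>, one of them is kept by DP-MSR and pulls the agent down.\<close>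
lemma x_Suc_le_leaving_upper_set:
  assumes f: "1 \<le> f" and s: "k0 < s" and i: "i \<notin> M" and \<epsilon>: "0 \<le> \<epsilon>"
  defines "S \<equiv> {j. window_max k0 - \<epsilon> < x s j}"
  assumes leaves: "i \<notin> S \<or> i \<in> reach_set E (f + 1) S"
  shows "x (Suc s) i \<le> window_max k0 - \<eta> * \<epsilon>"
proof -
  obtain s' where s': "s = Suc s'" "k0 \<le> s'" using s by (cases s) auto
  let ?W = "window_max k0"
  have W: "window_max s' \<le> ?W" using window_max_mono[OF s'(2)] .
  show ?thesis
  proof (cases "i \<in> S")
    case False
    then have "\<epsilon> \<le> ?W - x s i" unfolding S_def by simp
    then have "\<eta> * \<epsilon> \<le> coef1 s i * (?W - x s i)"
      using \<eta>_le_coef1[OF f i] coef1_nonneg \<epsilon> by (intro mult_mono) auto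
    then show ?thesis using two_step_upper(1)[OF i W] s' by simp
  next
    case True
    let ?Low = "{j. (j, i) \<in> E \<and> j \<notin> S}"
    obtain A B where L: "ignored_large (in_nbrs E i) (\<lambda>j. x s j - x s i) f A"
      and Sm: "ignored_small (in_nbrs E i) (\<lambda>j. x s j - x s i) f B" and R: "ignored s i = A \<union> B"
      using ignored[OF i, of s] unfolding dpmsr_ignored_def by blast
    have "f + 1 \<le> card ?Low" using True leaves unfolding reach_set_def by auto
    moreover have "?Low \<subseteq> in_nbrs E i" unfolding in_nbrs_def by auto
    moreover have "\<forall>j\<in>?Low. x s j - x s i < 0" using True unfolding S_def by auto
    ultimately have "\<exists>j\<in>?Low. j \<notin> A \<union> B"
      by (intro kept_if_many_below[OF _ L Sm]) simp_all
    then obtain j where j: "j \<in> ?Low" "j \<notin> A \<union> B" by blast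
    then have "j \<in> kept s i" "\<epsilon> \<le> ?W - x s j"
      unfolding kept_def R S_def in_nbrs_def by auto
    moreover have "\<eta> \<le> h * a i j" using j(1) \<eta>_le_weight unfolding in_nbrs_def by blast
    ultimately have "\<eta> * \<epsilon> \<le> h * a i j * (?W - x s j)"
      using \<eta>_pos \<epsilon> by (intro mult_mono) auto
    then show ?thesis using two_step_upper(2)[OF i W, of j] \<open>j \<in> kept s i\<close> s' by simp
  qed
qed

lemma x_Suc_ge_leaving_lower_set:
  assumes f: "1 \<le> f" and s: "k0 < s" and i: "i \<notin> M" and \<epsilon>: "0 \<le> \<epsilon>"
  defines "S \<equiv> {j. x s j < window_min k0 + \<epsilon>}"
  assumes leaves: "i \<notin> S \<or> i \<in> reach_set E (f + 1) S"
  shows "window_min k0 + \<eta> * \<epsilon> \<le> x (Suc s) i"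
proof -
  have "{j. dpmsr_run.window_max M (\<lambda>k i. - x k i) k0 - \<epsilon> < - x s j} = S"
    unfolding S_def window_max_uminus by auto
  then have "- x (Suc s) i \<le> dpmsr_run.window_max M (\<lambda>k i. - x k i) k0 - \<eta> * \<epsilon>"
    using dpmsr_run.x_Suc_le_leaving_upper_set[OF uminus_run f s i \<epsilon>] leaves by simp
  then show ?thesis unfolding window_max_uminus by simp
qed

lemma window_max_le_after:
  assumes f: "1 \<le> f" and s: "k0 < s" and \<epsilon>: "0 \<le> \<epsilon>"
    and below: "\<forall>i. i \<notin> M \<longrightarrow> x s i \<le> window_max k0 - \<epsilon>"
  shows "window_max s \<le> window_max k0 - \<eta> * \<epsilon>"
  unfolding window_max_le_iff
proof (intro allI impI conjI)
  fix i
  assume i: "i \<notin> M"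
  have "\<eta> * \<epsilon> \<le> \<epsilon>" using \<eta>_pos \<eta>_le_one \<epsilon> by (simp add: mult_left_le_one_le)
  moreover have "x s i \<le> window_max k0 - \<epsilon>" using below i by blast
  ultimately show "x s i \<le> window_max k0 - \<eta> * \<epsilon>" by linarith
  have "x s i \<le> window_max k0 - \<epsilon>" using below i by blast
  then show "x (Suc s) i \<le> window_max k0 - \<eta> * \<epsilon>"
    by (intro x_Suc_le_leaving_upper_set[OF f s i \<epsilon>]) simp
qed

lemma window_min_ge_after:
  assumes f: "1 \<le> f" and s: "k0 < s" and \<epsilon>: "0 \<le> \<epsilon>"
    and above: "\<forall>i. i \<notin> M \<longrightarrow> window_min k0 + \<epsilon> \<le> x s i"
  shows "window_min k0 + \<eta> * \<epsilon> \<le> window_min s"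
proof -
  have "\<forall>i. i \<notin> M \<longrightarrow> - x s i \<le> dpmsr_run.window_max M (\<lambda>k i. - x k i) k0 - \<epsilon>"
    using above unfolding window_max_uminus by auto
  then show ?thesis
    using dpmsr_run.window_max_le_after[OF uminus_run f s \<epsilon>] unfolding window_max_uminus by simp
qed

text \<open>The normal agents above W - \<epsilon>_l and below w + \<epsilon>_l, \<epsilon>_l = \<eta>^l \<delta>, form two shrinking families
  of sets; robustness makes one of them shrink strictly at every step, so one of them empties
  within 2n steps.\<close>
lemma normal_agents_leave_one_end:
  assumes f: "1 \<le> f" and rob: "rs_robust E (f + 1) (f + 1)"
    and \<delta>: "0 \<le> \<delta>" "2 * \<delta> \<le> diam k0"
  defines "L \<equiv> 2 * CARD('v)"
  shows "(\<forall>i. i \<notin> M \<longrightarrow> x (Suc (k0 + L)) i \<le> window_max k0 - \<eta> ^ L * \<delta>) \<or>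
    (\<forall>i. i \<notin> M \<longrightarrow> window_min k0 + \<eta> ^ L * \<delta> \<le> x (Suc (k0 + L)) i)"
proof -
  define \<epsilon> where "\<epsilon> l = \<eta> ^ l * \<delta>" for l
  define top where "top l = {j. window_max k0 - \<epsilon> l < x (Suc (k0 + l)) j}" for l
  define bot where "bot l = {j. x (Suc (k0 + l)) j < window_min k0 + \<epsilon> l}" for l
  have \<epsilon>_nonneg: "0 \<le> \<epsilon> l" for l unfolding \<epsilon>_def using \<eta>_pos \<delta>(1) by simp
  have \<epsilon>_Suc: "\<epsilon> (Suc l) = \<eta> * \<epsilon> l" for l unfolding \<epsilon>_def by simp
  have "top l \<inter> bot l = {}" for l
  proof -
    have "\<eta> ^ l \<le> 1" using \<eta>_pos \<eta>_le_one by (simp add: power_le_one)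
    then have "\<epsilon> l \<le> \<delta>" unfolding \<epsilon>_def using \<delta>(1) \<eta>_pos by (intro mult_left_le_one_le) simp_all
    then show ?thesis unfolding top_def bot_def using \<delta>(2) unfolding diam_def by auto
  qed
  have leaves_top: "i \<notin> top (Suc l)" if "i \<notin> M" "i \<notin> top l \<or> i \<in> reach_set E (f + 1) (top l)" for i l
  proof -
    have "x (Suc (Suc (k0 + l))) i \<le> window_max k0 - \<eta> * \<epsilon> l"
      using that(2) by (intro x_Suc_le_leaving_upper_set[OF f _ that(1) \<epsilon>_nonneg]) (simp_all add: top_def)
    then show ?thesis unfolding top_def \<epsilon>_Suc by simp
  qed
  have leaves_bot: "i \<notin> bot (Suc l)" if "i \<notin> M" "i \<notin> bot l \<or> i \<in> reach_set E (f + 1) (bot l)" for i l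
  proof -
    have "window_min k0 + \<eta> * \<epsilon> l \<le> x (Suc (Suc (k0 + l))) i"
      using that(2) by (intro x_Suc_ge_leaving_lower_set[OF f _ that(1) \<epsilon>_nonneg]) (simp_all add: bot_def)
    then show ?thesis unfolding bot_def \<epsilon>_Suc by simp
  qed
  have top_shrinks: "top (Suc l) - M \<subseteq> top l - M" and bot_shrinks: "bot (Suc l) - M \<subseteq> bot l - M" for l
    using leaves_top leaves_bot by blast+
  have "top (Suc l) - M \<subset> top l - M \<or> bot (Suc l) - M \<subset> bot l - M"
    if ne: "top l - M \<noteq> {}" "bot l - M \<noteq> {}" for l
  proof -
    obtain i where "i \<notin> M" "i \<in> reach_set E (f + 1) (top l) \<union> reach_set E (f + 1) (bot l)"
      using robust_normal_in_reach[OF rob card_M ne \<open>top l \<inter> bot l = {}\<close>] by blast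
    then show ?thesis
      using leaves_top[of i l] leaves_bot[of i l] top_shrinks[of l] bot_shrinks[of l]
      unfolding reach_set_def by blast
  qed
  then have "top L - M = {} \<or> bot L - M = {}"
    unfolding L_def using shrinking_pair_empty[of "\<lambda>l. top l - M" "\<lambda>l. bot l - M"] top_shrinks bot_shrinks
    by blast
  then show ?thesis unfolding top_def bot_def \<epsilon>_def by (auto simp: not_less[symmetric])
qed

lemma diam_contracts_f1:
  assumes f: "1 \<le> f" and rob: "rs_robust E (f + 1) (f + 1)"
  shows "diam (k0 + Suc (2 * CARD('v))) \<le> (1 - \<eta> ^ Suc (2 * CARD('v)) / 2) * diam k0"
proof -
  define L where "L = 2 * CARD('v)"
  define \<epsilon> where "\<epsilon> = \<eta> ^ L * (diam k0 / 2)"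
  have \<epsilon>: "0 \<le> \<epsilon>" unfolding \<epsilon>_def using \<eta>_pos diam_nonneg by simp
  have "window_max (k0 + Suc L) \<le> window_max k0" "window_min k0 \<le> window_min (k0 + Suc L)"
    by (simp_all add: window_max_mono window_min_mono)
  moreover have "window_max (Suc (k0 + L)) \<le> window_max k0 - \<eta> * \<epsilon> \<or>
      window_min k0 + \<eta> * \<epsilon> \<le> window_min (Suc (k0 + L))"
    using normal_agents_leave_one_end[OF f rob, of "diam k0 / 2" k0] diam_nonneg
      window_max_le_after[OF f _ \<epsilon>, of k0 "Suc (k0 + L)"] window_min_ge_after[OF f _ \<epsilon>, of k0 "Suc (k0 + L)"]
    unfolding L_def \<epsilon>_def by auto
  ultimately have "diam (k0 + Suc L) \<le> diam k0 - \<eta> * \<epsilon>"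
    unfolding diam_def by auto
  also have "\<dots> = (1 - \<eta> ^ Suc L / 2) * diam k0" unfolding \<epsilon>_def by (simp add: algebra_simps)
  finally show ?thesis unfolding L_def .
qed

lemma no_malicious_if_f0: "f = 0 \<Longrightarrow> M = {}"
  using card_M by simp

lemma kept_if_f0: "f = 0 \<Longrightarrow> kept k i = in_nbrs E i"
  using ignored[of i k] dpmsr_ignored_zero no_malicious_if_f0 unfolding kept_def by blast

lemma gap_lagged_supersolution:
  assumes f0: "f = 0"
  shows "lagged_supersolution E \<eta> (\<lambda>t i. window_max k0 - x (k0 + t) i)"
proof -
  let ?W = "window_max k0"
  have normal: "i \<notin> M" for i using no_malicious_if_f0[OF f0] by simp
  have W: "window_max (k0 + s) \<le> ?W" for s by (simp add: window_max_mono)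
  have gap: "0 \<le> ?W - x k i" if "k0 \<le> k" for k i using x_le_window_max[OF that normal] by simp
  have edge: "\<eta> * (?W - x (Suc (k0 + s)) j) \<le> ?W - x (Suc (Suc (k0 + s))) i \<and>
      \<eta> * (?W - x (k0 + s) j) \<le> ?W - x (Suc (Suc (k0 + s))) i" if ji: "(j, i) \<in> E" for s i j
  proof -
    have j: "j \<in> kept k i" for k using kept_if_f0[OF f0] ji unfolding in_nbrs_def by simp
    have "\<eta> * g \<le> h * a i j * g" if "0 \<le> g" for g
      using \<eta>_le_weight[of j i] ji that unfolding in_nbrs_def by (intro mult_right_mono) auto
    then show ?thesis
      using two_step_upper(2)[OF normal W j] two_step_upper(3)[OF normal W j]
        gap[of "Suc (k0 + s)" j] gap[of "k0 + s" j]
      by (smt (verit) le_add1 le_SucI)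
  qed
  have own: "\<eta> * (?W - x (Suc (k0 + s)) i) \<le> ?W - x (Suc (Suc (k0 + s))) i"
    if "in_nbrs E i = {}" for s i
  proof -
    have "kept_weight (Suc (k0 + s)) i = 0" using kept_if_f0[OF f0] that unfolding kept_weight_def by simp
    then have "\<eta> \<le> coef1 (Suc (k0 + s)) i" using coef1_ge[of "Suc (k0 + s)" i] \<eta>_le_h by simp
    then have "\<eta> * (?W - x (Suc (k0 + s)) i) \<le> coef1 (Suc (k0 + s)) i * (?W - x (Suc (k0 + s)) i)"
      using gap[of "Suc (k0 + s)" i] by (intro mult_right_mono) auto
    then show ?thesis using two_step_upper(1)[OF normal[of i] W[of s]] by simp
  qed
  show ?thesis unfolding lagged_supersolution_def using edge own by simp
qed

lemma diam_contracts_f0: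
  assumes f0: "f = 0"
    and N: "\<forall>\<zeta> e. 0 < \<zeta> \<longrightarrow> \<zeta> \<le> 1 \<longrightarrow> 0 \<le> e 1 r \<longrightarrow> lagged_supersolution E \<zeta> e \<longrightarrow>
      (\<forall>i t. N \<le> t \<longrightarrow> \<zeta> ^ t * e 1 r \<le> e t i)"
  shows "diam (k0 + N) \<le> (1 - \<eta> ^ Suc N) * diam k0"
proof -
  define up where "up t i = window_max k0 - x (k0 + t) i" for t i
  define lo where "lo t i = x (k0 + t) i - window_min k0" for t i
  have normal: "i \<notin> M" for i using no_malicious_if_f0[OF f0] by simp
  have "lagged_supersolution E \<eta> up" unfolding up_def by (rule gap_lagged_supersolution[OF f0])
  moreover have "lagged_supersolution E \<eta> lo"
    using dpmsr_run.gap_lagged_supersolution[OF uminus_run f0, of k0]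
    unfolding lo_def window_max_uminus by simp
  moreover have "0 \<le> up 1 r" "0 \<le> lo 1 r"
    unfolding up_def lo_def using x_le_window_max window_min_le_x normal by simp_all
  ultimately have bound: "\<eta> ^ Suc N * up 1 r \<le> up t i \<and> \<eta> ^ Suc N * lo 1 r \<le> lo t i"
    if "N \<le> t" "t \<le> Suc N" for t i
  proof -
    have "\<eta> ^ Suc N \<le> \<eta> ^ t" using that \<eta>_pos \<eta>_le_one by (intro power_decreasing) auto
    then show ?thesis
      using N \<eta>_pos \<eta>_le_one that \<open>0 \<le> up 1 r\<close> \<open>0 \<le> lo 1 r\<close>
        \<open>lagged_supersolution E \<eta> up\<close> \<open>lagged_supersolution E \<eta> lo\<close>
      by (meson mult_right_mono order_trans)
  qed
  have "window_max (k0 + N) \<le> window_max k0 - \<eta> ^ Suc N * up 1 r"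
    unfolding window_max_le_iff
  proof (intro allI impI)
    fix i
    show "x (k0 + N) i \<le> window_max k0 - \<eta> ^ Suc N * up 1 r \<and>
        x (Suc (k0 + N)) i \<le> window_max k0 - \<eta> ^ Suc N * up 1 r"
      using bound[of N i] bound[of "Suc N" i] unfolding up_def[of N] up_def[of "Suc N"] by simp
  qed
  moreover have "window_min k0 + \<eta> ^ Suc N * lo 1 r \<le> window_min (k0 + N)"
    unfolding window_min_ge_iff
  proof (intro allI impI)
    fix i
    show "window_min k0 + \<eta> ^ Suc N * lo 1 r \<le> x (k0 + N) i \<and>
        window_min k0 + \<eta> ^ Suc N * lo 1 r \<le> x (Suc (k0 + N)) i"
      using bound[of N i] bound[of "Suc N" i] unfolding lo_def[of N] lo_def[of "Suc N"] by simp
  qed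
  moreover have "\<eta> ^ Suc N * up 1 r + \<eta> ^ Suc N * lo 1 r = \<eta> ^ Suc N * diam k0"
    unfolding up_def lo_def diam_def by (simp add: algebra_simps)
  ultimately have "diam (k0 + N) \<le> diam k0 - \<eta> ^ Suc N * diam k0"
    unfolding diam_def[of "k0 + N"] diam_def[of k0] by linarith
  then show ?thesis by (simp add: algebra_simps)
qed

lemma window_contracts:
  assumes rob: "rs_robust E (f + 1) (f + 1)"
  obtains N \<delta> where "0 < \<delta>" "\<delta> \<le> 1" "\<And>k. diam (k + N) \<le> (1 - \<delta>) * diam k"
proof (cases "f = 0")
  case True
  then obtain r where "\<forall>i. (r, i) \<in> E\<^sup>*" using robust_has_root rob by auto
  then obtain N where N: "\<forall>\<zeta> e. 0 < \<zeta> \<longrightarrow> \<zeta> \<le> 1 \<longrightarrow> 0 \<le> e 1 r \<longrightarrow>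
      lagged_supersolution E \<zeta> e \<longrightarrow> (\<forall>i t. N \<le> t \<longrightarrow> \<zeta> ^ t * e 1 r \<le> e t i)"
    using lagged_supersolution_spread by blast
  moreover have "0 < \<eta> ^ Suc N" using \<eta>_pos by simp
  moreover have "\<eta> ^ Suc N \<le> 1" using \<eta>_pos \<eta>_le_one by (intro power_le_one) auto
  ultimately show ?thesis using that[where N = N and \<delta> = "\<eta> ^ Suc N"] diam_contracts_f0[OF True N] by simp
next
  case False
  define N where "N = Suc (2 * CARD('v))"
  have "0 < \<eta> ^ N / 2" "\<eta> ^ N / 2 \<le> 1" using \<eta>_pos \<eta>_le_one power_le_one[of \<eta> N] by simp_all
  then show ?thesis using that[where N = N and \<delta> = "\<eta> ^ N / 2"] diam_contracts_f1[OF _ rob] False unfolding N_def by simp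
qed

lemma diam_decseq: "decseq diam"
  unfolding diam_def by (intro decseq_SucI diff_mono window_max_mono window_min_mono) simp_all

lemma kept_disagreement_le_diam:
  assumes i: "i \<notin> M"
  shows "\<bar>kept_weight k i * x k i - kept_moment k i\<bar> \<le> diam k"
proof -
  let ?w = "kept_weight k i"
  have w: "0 \<le> ?w" "?w \<le> 1" using kept_weight_nonneg kept_weight_le_one by auto
  have "window_min k \<le> normal_min k" "normal_max k \<le> window_max k"
    unfolding window_min_def window_max_def by simp_all
  then have "?w * window_min k \<le> ?w * normal_min k" "?w * normal_max k \<le> ?w * window_max k"
    using w(1) by (simp_all add: mult_left_mono)
  then have "?w * window_min k \<le> kept_moment k i" "kept_moment k i \<le> ?w * window_max k"
    using kept_moment_bounds[OF i, of k] by linarith+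
  moreover have "?w * window_min k \<le> ?w * x k i" "?w * x k i \<le> ?w * window_max k"
    using window_min_le_x[of k k i] x_le_window_max[of k k i] i w by (simp_all add: mult_left_mono)
  moreover have "?w * window_max k - ?w * window_min k = ?w * diam k"
    unfolding diam_def by (simp add: algebra_simps)
  moreover have "?w * diam k \<le> diam k" using w diam_nonneg by (simp add: mult_left_le_one_le)
  ultimately show ?thesis by linarith
qed

lemma consensus_if_diam_tendsto_zero:
  assumes D: "diam \<longlonglongrightarrow> 0"
  shows "\<exists>c\<in>{window_min 0..window_max 0}. \<forall>i. i \<notin> M \<longrightarrow> (\<lambda>k. x k i) \<longlonglongrightarrow> c \<and> (\<lambda>k. v k i) \<longlonglongrightarrow> 0"
proof -
  have dec: "decseq window_max" and inc: "incseq window_min"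
    unfolding decseq_def incseq_def using window_max_mono window_min_mono by blast+
  have "\<forall>k. window_min 0 \<le> window_max k"
  proof
    fix k
    show "window_min 0 \<le> window_max k"
      using window_min_mono[of 0 k] diam_nonneg[of k] unfolding diam_def by simp
  qed
  then obtain c where c: "window_max \<longlonglongrightarrow> c" "\<forall>k. c \<le> window_max k"
    using decseq_convergent[OF dec] by blast
  have "(\<lambda>k. window_max k - diam k) \<longlonglongrightarrow> c - 0" using c(1) D by (rule tendsto_diff)
  then have c_min: "window_min \<longlonglongrightarrow> c" unfolding diam_def by simp
  have "(\<lambda>k. x k i) \<longlonglongrightarrow> c \<and> (\<lambda>k. v k i) \<longlonglongrightarrow> 0" if i: "i \<notin> M" for i
  proof -
    have x: "(\<lambda>k. x k i) \<longlonglongrightarrow> c"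
      using window_min_le_x[of _ _ i] x_le_window_max[of _ _ i] i
      by (intro tendsto_sandwich[OF _ _ c_min c(1)]) auto
    define s where "s k = kept_weight k i * x k i - kept_moment k i" for k
    have s: "s \<longlonglongrightarrow> 0"
      using kept_disagreement_le_diam[OF i] unfolding s_def by (intro Lim_null_comparison[OF _ D]) simp
    have "v k i = (x (Suc k) i - x k i + h * s k) / \<kappa>" for k
      using normal_step(1)[OF i, of k] \<kappa>_pos unfolding s_def by (simp add: field_simps)
    moreover have "(\<lambda>k. (x (Suc k) i - x k i + h * s k) / \<kappa>) \<longlonglongrightarrow> (c - c + h * 0) / \<kappa>"
      using \<kappa>_pos by (intro tendsto_intros x LIMSEQ_Suc[OF x] s) simp
    ultimately show ?thesis using x by simp
  qed
  moreover have "c \<in> {window_min 0..window_max 0}" using c(2) incseq_le[OF inc c_min] by simp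
  ultimately show ?thesis by blast
qed

lemma safe_agree_if_robust:
  assumes rob: "rs_robust E (f + 1) (f + 1)"
  shows "safe_agree M x v (safety_interval M \<alpha> T (x 0) (v 0))"
proof -
  obtain N \<delta> where "0 < \<delta>" "\<delta> \<le> 1" "\<And>k. diam (k + N) \<le> (1 - \<delta>) * diam k"
    using window_contracts[OF rob] by blast
  then have "diam \<longlonglongrightarrow> 0" using decseq_tendsto_zero_if_contracts[OF diam_decseq diam_nonneg] by blast
  then obtain c where "c \<in> safety_interval M \<alpha> T (x 0) (v 0)"
    "\<forall>i. i \<notin> M \<longrightarrow> (\<lambda>k. x k i) \<longlonglongrightarrow> c \<and> (\<lambda>k. v k i) \<longlonglongrightarrow> 0"
    using consensus_if_diam_tendsto_zero window_within_safety_interval by blast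
  moreover have "x k i \<in> safety_interval M \<alpha> T (x 0) (v 0)" if "i \<notin> M" for k i
    using x_le_window_max[of 0 k i] window_min_le_x[of 0 k i] that window_within_safety_interval
    by auto
  moreover obtain lo hi where "safety_interval M \<alpha> T (x 0) (v 0) = {lo..hi}"
    unfolding safety_interval_def by blast
  ultimately show ?thesis
    unfolding safe_agree_def by auto
qed

end

section \<open>Necessity and the main theorem\<close>

lemma not_resilient_if_not_robust:
  fixes E :: "('v::finite \<times> 'v) set"
  assumes "\<not> rs_robust E (f + 1) (f + 1)"
  shows "\<not> resilient_consensus_total E a f \<alpha> T"
proof
  assume "resilient_consensus_total E a f \<alpha> T"
  then obtain SI where SI: "\<forall>M. M \<noteq> UNIV \<and> card M \<le> f \<longrightarrow> (\<forall>x v. execution E a f \<alpha> T M x v \<longrightarrow>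
      safe_agree M x v (SI M (normal_part M (x 0)) (normal_part M (v 0))))"
    unfolding resilient_consensus_total_def by blast
  obtain S1 S2 where S: "S1 \<inter> S2 = {}"
    "reach_set E (f + 1) S1 \<noteq> S1" "reach_set E (f + 1) S2 \<noteq> S2"
    "\<not> f + 1 \<le> card (reach_set E (f + 1) S1) + card (reach_set E (f + 1) S2)"
    using assms unfolding rs_robust_def by blast
  \<comment> \<open>the agents with f + 1 in-neighbours outside their group are declared malicious\<close>
  define M where "M = reach_set E (f + 1) S1 \<union> reach_set E (f + 1) S2"
  have "card M \<le> f"
    using S(4) card_Un_le[of "reach_set E (f + 1) S1" "reach_set E (f + 1) S2"] unfolding M_def by linarith
  have reach_sub: "reach_set E (f + 1) S \<subseteq> S" for S unfolding reach_set_def by blast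
  obtain i1 i2 where "i1 \<in> S1 - reach_set E (f + 1) S1" "i2 \<in> S2 - reach_set E (f + 1) S2"
    using S(2,3) reach_sub psubset_imp_ex_mem by (metis psubsetI)
  then have i: "i1 \<in> S1 - M" "i2 \<in> S2 - M" using S(1) reach_sub unfolding M_def by blast+
  then have "M \<noteq> UNIV" by blast
  have few: "\<forall>j\<in>S - M. card {l. (l, j) \<in> E \<and> l \<notin> S} \<le> f" if "S = S1 \<or> S = S2" for S
  proof
    fix j
    assume "j \<in> S - M"
    then have "j \<in> S" "j \<notin> reach_set E (f + 1) S" using that unfolding M_def by auto
    then show "card {l. (l, j) \<in> E \<and> l \<notin> S} \<le> f" unfolding reach_set_def by simp
  qed
  obtain x v where x0: "x 0 = (\<lambda>j. if j \<in> S2 then 1 else 0)" and v0: "v 0 = (\<lambda>_. 0)"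
    and ex: "execution E a f \<alpha> T M x v"
    and idle: "\<forall>k. \<forall>i\<in>M. x (Suc k) i = x k i + T * v k i \<and> v (Suc k) i = v k i"
    by (rule execution_exists)
  have frozen: "\<forall>j\<in>S. x k j = c \<and> v k j = 0"
    if "S = S1 \<or> S = S2" "\<forall>j\<in>S. x 0 j = c \<and> v 0 j = 0" for S c k
    using execution_freezes_group[OF ex idle few[OF that(1)] that(2)] .
  have "\<forall>j\<in>S1. x 0 j = 0 \<and> v 0 j = 0" "\<forall>j\<in>S2. x 0 j = 1 \<and> v 0 j = 0"
    using x0 v0 S(1) by auto
  then have "\<forall>j\<in>S1. x k j = 0 \<and> v k j = 0" "\<forall>j\<in>S2. x k j = 1 \<and> v k j = 0" for k
    using frozen by blast+
  then have "(\<lambda>k. x k i1) = (\<lambda>k. 0)" "(\<lambda>k. x k i2) = (\<lambda>k. 1)" using i by auto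
  moreover have "safe_agree M x v (SI M (normal_part M (x 0)) (normal_part M (v 0)))"
    using SI \<open>card M \<le> f\<close> \<open>M \<noteq> UNIV\<close> ex by blast
  then obtain c where "\<forall>i. i \<notin> M \<longrightarrow> (\<lambda>k. x k i) \<longlonglongrightarrow> c"
    unfolding safe_agree_def by blast
  ultimately have "(\<lambda>k. 0 :: real) \<longlonglongrightarrow> c" "(\<lambda>k. 1 :: real) \<longlonglongrightarrow> c" using i by auto
  then show False unfolding LIMSEQ_const_iff by simp
qed

lemma safety_interval_normal_part:
  "safety_interval M \<alpha> T (normal_part M x0) (normal_part M v0) = safety_interval M \<alpha> T x0 v0"
proof -
  have "{normal_part M g i | i. i \<notin> M} = {g i | i. i \<notin> M}" for g
    unfolding normal_part_def by auto
  moreover have "{c * normal_part M g i | i. i \<notin> M} = {c * g i | i. i \<notin> M}" for c g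
    unfolding normal_part_def by auto
  ultimately show ?thesis unfolding safety_interval_def by simp
qed

theorem theorem1:
  fixes E :: "('v::finite \<times> 'v) set"
    and a :: "'v \<Rightarrow> 'v \<Rightarrow> real"
    and \<gamma> T \<alpha> :: real
    and f :: nat
  assumes n_gt1: "CARD('v) > 1"
    and no_loops: "\<forall>i. (i, i) \<notin> E"
    and gamma_pos: "\<gamma> > 0"
    and weights: "\<forall>i j. (j, i) \<in> E \<longrightarrow> \<gamma> \<le> a i j \<and> a i j < 1"
    and weight_sum: "\<forall>i. (\<Sum>j \<in> in_nbrs E i. a i j) \<le> 1"
    and T_pos: "T > 0"
    and alpha_pos: "\<alpha> > 0"
    and cond_lo: "1 + T\<^sup>2 / 2 \<le> \<alpha> * T"
    and cond_hi: "\<alpha> * T \<le> 2 - T\<^sup>2 / 2"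
  shows "(resilient_consensus_total E a f \<alpha> T \<longleftrightarrow> rs_robust E (f + 1) (f + 1)) \<and>
         (rs_robust E (f + 1) (f + 1) \<longrightarrow>
            (\<forall>M. M \<noteq> UNIV \<and> card M \<le> f \<longrightarrow>
               (\<forall>x v. execution E a f \<alpha> T M x v \<longrightarrow>
                  safe_agree M x v (safety_interval M \<alpha> T (x 0) (v 0)))))"
proof -
  have safe: "safe_agree M x v (safety_interval M \<alpha> T (x 0) (v 0))"
    if rob: "rs_robust E (f + 1) (f + 1)" and M: "M \<noteq> UNIV" "card M \<le> f"
      and ex: "execution E a f \<alpha> T M x v" for M x v
  proof -
    interpret dpmsr_run E a \<gamma> T \<alpha> f M x v
      using gamma_pos weights weight_sum T_pos cond_lo cond_hi ex M by unfold_locales auto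
    show ?thesis using safe_agree_if_robust[OF rob] .
  qed
  have "resilient_consensus_total E a f \<alpha> T" if rob: "rs_robust E (f + 1) (f + 1)"
    unfolding resilient_consensus_total_def
  proof (intro exI[of _ "\<lambda>M x0 v0. safety_interval M \<alpha> T x0 v0"] allI impI)
    fix M x v
    assume "M \<noteq> UNIV \<and> card M \<le> f" "execution E a f \<alpha> T M x v"
    then show "safe_agree M x v
        ((\<lambda>M x0 v0. safety_interval M \<alpha> T x0 v0) M (normal_part M (x 0)) (normal_part M (v 0)))"
      using safe[OF rob] by (simp add: safety_interval_normal_part)
  qed
  then show ?thesis using safe not_resilient_if_not_robust[of E f a \<alpha> T] by blast
qed

end
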